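(* Let $H$, $\dot\mu_\theta$, the scanning family $\{A_z\}$ and the transformation $\mathcal{K}$ be as in the context, with $\mathcal{C}_z$ nonsingular for all $z\in\mathbb{R}$. Let $b$ be as in the context and let $Z$ be any random vector in $\mathbb{R}^q$ (not necessarily Gaussian) defined on the same probability space, and set $\tilde\xi(\gamma,\varphi)=b(\gamma,\varphi)-\int\gamma\dot\mu_\theta^TdH\,Z$. Then for any fixed $\varphi\in L_2(\mathbb{R},F)$ the process $w(\gamma,\varphi)=\tilde\xi(\mathcal{K}\gamma,\varphi)$, $\gamma\in L_2(\mathbb{R}^p,H)$, is a Brownian motion in $\gamma$, i.e., a zero-mean Gaussian process with covariance $\int\gamma_1\gamma_2dH\int\varphi^2dF$.
   Context: $H$ is a distribution function on $\mathbb{R}^p$, $F$ one on $\mathbb{R}$; $\dot\mu_\theta:\mathbb{R}^p\to\mathbb{R}^q$ has coordinates in $L_2(H)$ with $\int\dot\mu_\theta\dot\mu_\theta^TdH$ positive definite. A scanning family is a family of measurable $A_z\subset\mathbb{R}^p$, $z\in\mathbb{R}$, nondecreasing in $z$, with $H(A_{-\infty})=0$, $H(A_\infty)=1$, $z\mapsto H(A_z)$ strictly increasing and absolutely continuous. $z(x)=\inf\{z:A_z\ni x\}$, $\mathcal{C}_z=\int_{A_z^c}\dot\mu_\theta\dot\mu_\theta^TdH$, $\mathcal{T}\gamma(x)=\int_{A_{z(x)}}\gamma(y)\dot\mu_\theta^T(y)\mathcal{C}_{z(y)}^{-1}dH(y)\dot\mu_\theta(x)$, $\mathcal{K}\gamma=\gamma-\mathcal{T}\gamma$.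 $b$ is the zero-mean Gaussian process indexed by $(\gamma,\varphi)\in L_2(H)\times L_2(F)$, bilinear, with $Eb(\gamma_1,\varphi_1)b(\gamma_2,\varphi_2)=\int\gamma_1\gamma_2dH\int\varphi_1\varphi_2dF$. *)

theory Defs
  imports "HOL-Probability.Probability"
begin

text \<open>Square-integrable real functions with respect to a measure M (as functions,
  not equivalence classes).\<close>
definition L2 :: "'a measure \<Rightarrow> ('a \<Rightarrow> real) set" where
  "L2 M = {f. f \<in> borel_measurable M \<and> integrable M (\<lambda>x. (f x)\<^sup>2)}"

definition abs_cont_fun :: "(real \<Rightarrow> real) \<Rightarrow> bool" where
  "abs_cont_fun g \<longleftrightarrow> (\<forall>e>0. \<exists>d>0. \<forall>n (a::nat \<Rightarrow> real) (b::nat \<Rightarrow> real).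
      (\<forall>i<n. a i \<le> b i) \<and>
      (\<forall>i<n. \<forall>j<n. i \<noteq> j \<longrightarrow> {a i<..<b i} \<inter> {a j<..<b j} = {}) \<and>
      (\<Sum>i<n. b i - a i) < d
      \<longrightarrow> (\<Sum>i<n. \<bar>g (b i) - g (a i)\<bar>) < e)"

definition scanning_family :: "'a measure \<Rightarrow> (real \<Rightarrow> 'a set) \<Rightarrow> bool" where
  "scanning_family H A \<longleftrightarrow>
     (\<forall>z. A z \<in> sets H) \<and> mono A \<and>
     measure H (\<Inter>z. A z) = 0 \<and> measure H (\<Union>z. A z) = 1 \<and>
     strict_mono (\<lambda>z. measure H (A z)) \<and> abs_cont_fun (\<lambda>z. measure H (A z))"

definition outer :: "real ^ 'n \<Rightarrow> real ^ 'n ^ 'n" where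
  "outer v = (\<chi> i j. v $ i * v $ j)"

definition zfun :: "(real \<Rightarrow> 'a set) \<Rightarrow> 'a \<Rightarrow> real" where
  "zfun A x = Inf {z. x \<in> A z}"

definition Cmat :: "'a measure \<Rightarrow> ('a \<Rightarrow> real ^ 'q) \<Rightarrow> (real \<Rightarrow> 'a set) \<Rightarrow> real \<Rightarrow> real ^ 'q ^ 'q" where
  "Cmat H mu A z = (LINT y:(- A z)|H. outer (mu y))"

definition Top :: "'a measure \<Rightarrow> ('a \<Rightarrow> real ^ 'q) \<Rightarrow> (real \<Rightarrow> 'a set) \<Rightarrow> ('a \<Rightarrow> real) \<Rightarrow> 'a \<Rightarrow> real" where
  "Top H mu A g x =
     (LINT y:(A (zfun A x))|H. g y *\<^sub>R (mu y v* matrix_inv (Cmat H mu A (zfun A y)))) \<bullet> mu x"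

definition Kop :: "'a measure \<Rightarrow> ('a \<Rightarrow> real ^ 'q) \<Rightarrow> (real \<Rightarrow> 'a set) \<Rightarrow> ('a \<Rightarrow> real) \<Rightarrow> 'a \<Rightarrow> real" where
  "Kop H mu A g x = g x - Top H mu A g x"

definition real_gaussian :: "'w measure \<Rightarrow> ('w \<Rightarrow> real) \<Rightarrow> real \<Rightarrow> real \<Rightarrow> bool" where
  "real_gaussian M X m v \<longleftrightarrow> X \<in> borel_measurable M \<and> 0 \<le> v \<and>
     distr M borel X = (if v = 0 then return borel m else density lborel (normal_density m (sqrt v)))"

definition centered_gaussian_process ::
  "'w measure \<Rightarrow> 'i set \<Rightarrow> ('i \<Rightarrow> 'w \<Rightarrow> real) \<Rightarrow> ('i \<Rightarrow> 'i \<Rightarrow> real) \<Rightarrow> bool" where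
  "centered_gaussian_process M I X R \<longleftrightarrow>
     (\<forall>t\<in>I. X t \<in> borel_measurable M) \<and>
     (\<forall>J (c::'i \<Rightarrow> real). finite J \<and> J \<subseteq> I \<longrightarrow>
        real_gaussian M (\<lambda>w. \<Sum>t\<in>J. c t * X t w) 0 (\<Sum>s\<in>J. \<Sum>t\<in>J. c s * c t * R s t))"

end

theory Submission
  imports Defs
begin

text \<open>Write \<open>T\<gamma>(x) = a\<^sub>\<gamma>(z(x)) \<cdot> \<mu>(x)\<close> with \<open>a\<^sub>\<gamma>(t) = \<integral>\<^bsub>z \<le> t\<^esub> \<gamma> C\<^sub>z\<^sup>-\<^sup>1 \<mu> dH\<close>. Since
  \<open>C\<^sub>t = \<integral>\<^bsub>z(x) \<ge> t\<^esub> \<mu>\<mu>\<^sup>T dH\<close>, Fubini's theorem shows that the adjoint of \<open>T\<close> maps \<open>\<mu>\<cdot>v\<close> to itself,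
  so \<open>K\<gamma> = \<gamma> - T\<gamma>\<close> is orthogonal to the components of \<open>\<mu>\<close> and the \<open>Z\<close>-term vanishes.
  A second application of Fubini's theorem gives \<open>\<parallel>T\<gamma>\<parallel>\<^sup>2 = 2\<langle>\<gamma>, T\<gamma>\<rangle>\<close>: the double integral
  splits into the regions \<open>z(y') \<le> z(y)\<close> and \<open>z(y) < z(y')\<close>, which contribute equally because ties
  \<open>z(y) = z(y')\<close> are null by absolute continuity of \<open>t \<mapsto> H(A\<^sub>t)\<close>. Hence \<open>K\<close> is an isometry, first for
  \<open>\<gamma>\<close> vanishing above some level, where \<open>C\<^sub>z\<^sup>-\<^sup>1\<close> is uniformly bounded, and then on all of \<open>L\<^sub>2(H)\<close>
  by truncation. Finally \<open>K\<close> is injective, so the finite-dimensional distributions of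
  \<open>\<gamma> \<mapsto> b(K\<gamma>, \<phi>)\<close> are those of \<open>b\<close>, centered Gaussian with covariance
  \<open>\<langle>K\<gamma>\<^sub>1, K\<gamma>\<^sub>2\<rangle> \<parallel>\<phi>\<parallel>\<^sup>2 = \<langle>\<gamma>\<^sub>1, \<gamma>\<^sub>2\<rangle> \<parallel>\<phi>\<parallel>\<^sup>2\<close>.\<close>

section \<open>Integrability and square-integrable functions\<close>

lemma integrable_if_zero:
  fixes f :: "'a \<Rightarrow> real"
  assumes "integrable M f" "{x \<in> space M. P x} \<in> sets M"
  shows "integrable M (\<lambda>x. if P x then f x else 0)"
  using integrable_mult_indicator[OF assms(2,1)]
  by (rule Bochner_Integration.integrable_cong[THEN iffD1, rotated 2]) (auto simp: indicator_def)

lemma (in pair_sigma_finite) integrable_product_bound: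
  fixes F :: "'a \<times> 'b \<Rightarrow> real"
  assumes F: "F \<in> borel_measurable (M1 \<Otimes>\<^sub>M M2)" and P: "integrable M1 P" and Q: "integrable M2 Q"
    and bound: "\<And>x y. \<bar>F (x, y)\<bar> \<le> P x * Q y"
  shows "integrable (M1 \<Otimes>\<^sub>M M2) F"
proof (rule Bochner_Integration.integrable_bound[OF _ F])
  show "integrable (M1 \<Otimes>\<^sub>M M2) (\<lambda>p. P (fst p) * Q (snd p))"
  proof (rule Fubini_integrable)
    show "(\<lambda>p. P (fst p) * Q (snd p)) \<in> borel_measurable (M1 \<Otimes>\<^sub>M M2)"
      using P Q by measurable
    show "integrable M1 (\<lambda>x. \<integral>y. norm (P (fst (x, y)) * Q (snd (x, y))) \<partial>M2)"
      using P by (simp add: abs_mult)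
    show "AE x in M1. integrable M2 (\<lambda>y. P (fst (x, y)) * Q (snd (x, y)))"
      using Q by simp
  qed
  show "AE p in M1 \<Otimes>\<^sub>M M2. norm (F p) \<le> norm (P (fst p) * Q (snd p))"
  proof (rule AE_I2)
    fix p :: "'a \<times> 'b"
    have "\<bar>F p\<bar> \<le> P (fst p) * Q (snd p)" using bound[of "fst p" "snd p"] by simp
    then show "norm (F p) \<le> norm (P (fst p) * Q (snd p))" by simp
  qed
qed

lemma L2_measurable: "f \<in> L2 M \<Longrightarrow> f \<in> borel_measurable M"
  and L2_integrable_sq: "f \<in> L2 M \<Longrightarrow> integrable M (\<lambda>x. (f x)\<^sup>2)"
  by (simp_all add: L2_def)

lemma L2_mult_integrable:
  fixes f g :: "'a \<Rightarrow> real"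
  assumes "f \<in> L2 M" "g \<in> L2 M"
  shows "integrable M (\<lambda>x. f x * g x)"
proof (rule Bochner_Integration.integrable_bound)
  show "integrable M (\<lambda>x. (f x)\<^sup>2 + (g x)\<^sup>2)"
    using assms by (simp add: L2_integrable_sq)
  show "(\<lambda>x. f x * g x) \<in> borel_measurable M"
    using assms by (intro borel_measurable_times) (simp_all add: L2_measurable)
  have "\<bar>f x * g x\<bar> \<le> (f x)\<^sup>2 + (g x)\<^sup>2" for x
  proof -
    have "2 * (\<bar>f x\<bar> * \<bar>g x\<bar>) \<le> (f x)\<^sup>2 + (g x)\<^sup>2"
      using sum_squares_bound[of "\<bar>f x\<bar>" "\<bar>g x\<bar>"] by simp
    moreover have "0 \<le> \<bar>f x\<bar> * \<bar>g x\<bar>" by simp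
    ultimately show ?thesis unfolding abs_mult by linarith
  qed
  then show "AE x in M. norm (f x * g x) \<le> norm ((f x)\<^sup>2 + (g x)\<^sup>2)"
    by simp
qed

lemma L2_lincomb:
  fixes f g :: "'a \<Rightarrow> real"
  assumes "f \<in> L2 M" "g \<in> L2 M"
  shows "(\<lambda>x. a * f x + c * g x) \<in> L2 M"
proof -
  have "(\<lambda>x. (a * f x + c * g x)\<^sup>2) = (\<lambda>x. a\<^sup>2 * (f x)\<^sup>2 + c\<^sup>2 * (g x)\<^sup>2 + 2 * a * c * (f x * g x))"
    by (auto simp: power2_eq_square algebra_simps)
  then have "integrable M (\<lambda>x. (a * f x + c * g x)\<^sup>2)"
    using assms L2_mult_integrable[OF assms] by (simp add: L2_integrable_sq)
  moreover have "(\<lambda>x. a * f x + c * g x) \<in> borel_measurable M"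
    using L2_measurable[OF assms(1)] L2_measurable[OF assms(2)] by measurable
  ultimately show ?thesis by (simp add: L2_def)
qed

lemma L2_add: "f \<in> L2 M \<Longrightarrow> g \<in> L2 M \<Longrightarrow> (\<lambda>x. f x + g x) \<in> L2 M"
  and L2_diff: "f \<in> L2 M \<Longrightarrow> g \<in> L2 M \<Longrightarrow> (\<lambda>x. f x - g x) \<in> L2 M"
  using L2_lincomb[of f M g 1 1] L2_lincomb[of f M g 1 "-1"] by simp_all

lemma L2_abs:
  assumes "f \<in> L2 M"
  shows "(\<lambda>x. \<bar>f x\<bar>) \<in> L2 M"
proof -
  have [measurable]: "f \<in> borel_measurable M" using assms by (rule L2_measurable)
  have "(\<lambda>x. \<bar>f x\<bar>) \<in> borel_measurable M" by measurable
  with assms show ?thesis by (simp add: L2_def)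
qed

lemma L2_Cauchy_Schwarz:
  fixes f g :: "'a \<Rightarrow> real"
  assumes "f \<in> L2 M" "g \<in> L2 M"
  shows "(\<integral>x. f x * g x \<partial>M)\<^sup>2 \<le> (\<integral>x. (f x)\<^sup>2 \<partial>M) * (\<integral>x. (g x)\<^sup>2 \<partial>M)"
proof -
  let ?A = "\<integral>x. (f x)\<^sup>2 \<partial>M" and ?B = "\<integral>x. (g x)\<^sup>2 \<partial>M" and ?X = "\<integral>x. f x * g x \<partial>M"
  have quadratic: "0 \<le> ?A - 2 * s * ?X + s\<^sup>2 * ?B" for s
  proof -
    have "0 \<le> (\<integral>x. (f x - s * g x)\<^sup>2 \<partial>M)" by simp
    also have "\<dots> = (\<integral>x. (f x)\<^sup>2 - 2 * s * (f x * g x) + s\<^sup>2 * (g x)\<^sup>2 \<partial>M)"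
      by (rule Bochner_Integration.integral_cong) (auto simp: power2_eq_square algebra_simps)
    also have "\<dots> = ?A - 2 * s * ?X + s\<^sup>2 * ?B"
      using assms L2_mult_integrable[OF assms] by (simp add: L2_integrable_sq)
    finally show ?thesis .
  qed
  show ?thesis
  proof (cases "?B = 0")
    case True
    have "?X = 0"
    proof (rule ccontr)
      assume "?X \<noteq> 0"
      have "0 \<le> ?A - 2 * ((?A + 1) / (2 * ?X)) * ?X"
        using quadratic[of "(?A + 1) / (2 * ?X)"] True by simp
      also have "\<dots> = - 1" using \<open>?X \<noteq> 0\<close> by (simp add: field_simps)
      finally show False by simp
    qed
    then show ?thesis using True by simp
  next
    case False
    have "0 \<le> ?B" by simp
    with False have B: "0 < ?B" by linarith
    have "0 \<le> ?A - 2 * (?X / ?B) * ?X + (?X / ?B)\<^sup>2 * ?B" by (rule quadratic)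
    also have "\<dots> = ?A - ?X\<^sup>2 / ?B" using B by (simp add: field_simps power2_eq_square)
    finally have "?X\<^sup>2 / ?B \<le> ?A" by simp
    then show ?thesis using B by (simp add: field_simps mult.commute)
  qed
qed

lemma L2_tendsto_inner:
  fixes f h :: "'a \<Rightarrow> real"
  assumes f: "f \<in> L2 M" and fn: "\<And>n. fn n \<in> L2 M" and h: "h \<in> L2 M"
    and lim: "(\<lambda>n. \<integral>x. (f x - fn n x)\<^sup>2 \<partial>M) \<longlonglongrightarrow> 0"
  shows "(\<lambda>n. \<integral>x. fn n x * h x \<partial>M) \<longlonglongrightarrow> (\<integral>x. f x * h x \<partial>M)"
proof -
  define d where "d n = (\<integral>x. (f x - fn n x) * h x \<partial>M)" for n
  define e where "e n = sqrt ((\<integral>x. (f x - fn n x)\<^sup>2 \<partial>M) * (\<integral>x. (h x)\<^sup>2 \<partial>M))" for n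
  have bound: "norm (d n) \<le> e n" for n
  proof -
    have "(\<bar>d n\<bar>)\<^sup>2 \<le> (\<integral>x. (f x - fn n x)\<^sup>2 \<partial>M) * (\<integral>x. (h x)\<^sup>2 \<partial>M)"
      unfolding power2_abs d_def by (rule L2_Cauchy_Schwarz[OF L2_diff[OF f fn] h])
    then show ?thesis unfolding e_def real_norm_def by (rule real_le_rsqrt)
  qed
  have "e \<longlonglongrightarrow> sqrt (0 * (\<integral>x. (h x)\<^sup>2 \<partial>M))"
    unfolding e_def by (intro tendsto_intros lim)
  then have "d \<longlonglongrightarrow> 0"
    by (intro Lim_null_comparison[OF always_eventually[OF allI[OF bound]]]) simp
  then have "(\<lambda>n. (\<integral>x. f x * h x \<partial>M) - d n) \<longlonglongrightarrow> (\<integral>x. f x * h x \<partial>M) - 0"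
    by (intro tendsto_diff tendsto_const)
  moreover have "(\<integral>x. f x * h x \<partial>M) - d n = (\<integral>x. fn n x * h x \<partial>M)" for n
  proof -
    have "d n = (\<integral>x. f x * h x - fn n x * h x \<partial>M)"
      unfolding d_def by (rule Bochner_Integration.integral_cong) (simp_all add: left_diff_distrib)
    also have "\<dots> = (\<integral>x. f x * h x \<partial>M) - (\<integral>x. fn n x * h x \<partial>M)"
      by (rule Bochner_Integration.integral_diff[OF L2_mult_integrable[OF f h] L2_mult_integrable[OF fn h]])
    finally show ?thesis by simp
  qed
  ultimately show ?thesis by simp
qed

lemma L2_tendsto_sq:
  fixes f :: "'a \<Rightarrow> real"
  assumes f: "f \<in> L2 M" and fn: "\<And>n. fn n \<in> L2 M"
    and lim: "(\<lambda>n. \<integral>x. (f x - fn n x)\<^sup>2 \<partial>M) \<longlonglongrightarrow> 0"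
  shows "(\<lambda>n. \<integral>x. (fn n x)\<^sup>2 \<partial>M) \<longlonglongrightarrow> (\<integral>x. (f x)\<^sup>2 \<partial>M)"
proof -
  have "(\<integral>x. (fn n x)\<^sup>2 \<partial>M) = 2 * (\<integral>x. fn n x * f x \<partial>M) - (\<integral>x. (f x)\<^sup>2 \<partial>M) + (\<integral>x. (f x - fn n x)\<^sup>2 \<partial>M)" for n
  proof -
    have "(\<integral>x. (fn n x)\<^sup>2 \<partial>M) = (\<integral>x. 2 * (fn n x * f x) - (f x)\<^sup>2 + (f x - fn n x)\<^sup>2 \<partial>M)"
      by (rule Bochner_Integration.integral_cong) (auto simp: power2_eq_square algebra_simps)
    also have "\<dots> = 2 * (\<integral>x. fn n x * f x \<partial>M) - (\<integral>x. (f x)\<^sup>2 \<partial>M) + (\<integral>x. (f x - fn n x)\<^sup>2 \<partial>M)"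
      using L2_mult_integrable[OF fn f] L2_diff[OF f fn] f by (simp add: L2_integrable_sq)
    finally show ?thesis .
  qed
  moreover have "(\<lambda>n. 2 * (\<integral>x. fn n x * f x \<partial>M) - (\<integral>x. (f x)\<^sup>2 \<partial>M) + (\<integral>x. (f x - fn n x)\<^sup>2 \<partial>M))
      \<longlonglongrightarrow> 2 * (\<integral>x. f x * f x \<partial>M) - (\<integral>x. (f x)\<^sup>2 \<partial>M) + 0"
    by (intro tendsto_intros L2_tendsto_inner[OF f fn f lim] lim)
  ultimately show ?thesis by (simp add: power2_eq_square)
qed

section \<open>Vector- and matrix-valued functions\<close>

lemma borel_measurable_vec_iff:
  "(f :: 'a \<Rightarrow> real ^ 'n) \<in> borel_measurable M \<longleftrightarrow> (\<forall>i. (\<lambda>x. f x $ i) \<in> borel_measurable M)"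
proof
  assume "f \<in> borel_measurable M"
  then have "(\<lambda>x. f x \<bullet> axis i 1) \<in> borel_measurable M" for i
    by measurable
  then show "\<forall>i. (\<lambda>x. f x $ i) \<in> borel_measurable M"
    by (simp add: inner_axis)
next
  assume *: "\<forall>i. (\<lambda>x. f x $ i) \<in> borel_measurable M"
  show "f \<in> borel_measurable M"
  proof (subst borel_measurable_euclidean_space, intro ballI)
    fix b :: "real ^ 'n" assume "b \<in> Basis"
    then obtain i where "b = axis i 1" by (auto simp: Basis_vec_def)
    then show "(\<lambda>x. f x \<bullet> b) \<in> borel_measurable M" using * by (simp add: inner_axis)
  qed
qed

lemma integrable_vecI:
  fixes f :: "'a \<Rightarrow> 'b::euclidean_space ^ 'n"
  assumes "\<And>i. integrable M (\<lambda>x. f x $ i)"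
  shows "integrable M f"
proof -
  have "integrable M (\<lambda>x. f x \<bullet> b)" if "b \<in> Basis" for b
  proof -
    from that obtain i u where "b = axis i u" "u \<in> Basis" by (auto simp: Basis_vec_def)
    then show ?thesis using assms[of i] by (simp add: inner_axis)
  qed
  then have "integrable M (\<lambda>x. \<Sum>b\<in>Basis. (f x \<bullet> b) *\<^sub>R b)"
    by (intro Bochner_Integration.integrable_sum integrable_scaleR_left) auto
  then show ?thesis by (simp add: euclidean_representation)
qed

lemma borel_measurable_det:
  fixes M :: "'a \<Rightarrow> real ^ 'n ^ 'n"
  assumes [measurable]: "\<And>i j. (\<lambda>x. M x $ i $ j) \<in> borel_measurable N"
  shows "(\<lambda>x. det (M x)) \<in> borel_measurable N"
  unfolding det_def by measurable

lemma matrix_inv_mult: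
  fixes M :: "'a::semiring_1 ^ 'n ^ 'n"
  assumes "invertible M"
  shows "M ** matrix_inv M = mat 1" and "matrix_inv M ** M = mat 1"
  using someI_ex[OF assms[unfolded invertible_def]] by (simp_all add: matrix_inv_def)

lemma outer_mult_vector: "outer u *v v = (u \<bullet> v) *\<^sub>R u"
proof (rule vec_eq_iff[THEN iffD2], rule allI)
  fix i
  have "(outer u *v v) $ i = (\<Sum>j\<in>UNIV. u $ i * (u $ j * v $ j))"
    by (simp add: outer_def matrix_vector_mult_def mult.assoc)
  also have "\<dots> = u $ i * (u \<bullet> v)"
    by (simp add: inner_vec_def sum_distrib_left)
  finally show "(outer u *v v) $ i = ((u \<bullet> v) *\<^sub>R u) $ i" by simp
qed

lemma scaleR_matrix_vector_mult: "(c *\<^sub>R M) *v v = c *\<^sub>R (M *v v)" for M :: "real ^ 'n ^ 'm"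
  using matrix_scaleR_vector_ac[of M c v] matrix_vector_mult_scaleR[of M c v] by simp

lemma bounded_linear_inner_matrix_vector: "bounded_linear (\<lambda>M :: real ^ 'n ^ 'm. w \<bullet> (M *v v))"
proof -
  have "linear (\<lambda>M :: real ^ 'n ^ 'm. M *v v)"
    by (rule linearI) (simp_all add: matrix_vector_mult_add_rdistrib scaleR_matrix_vector_mult)
  then have "bounded_linear (\<lambda>M :: real ^ 'n ^ 'm. M *v v)"
    by (simp add: linear_conv_bounded_linear)
  then show ?thesis
    by (rule bounded_linear_compose[OF bounded_linear_inner_right])
qed

lemma quadratic_form_coercive:
  fixes M :: "real ^ 'n ^ 'n"
  assumes pos: "\<And>v. v \<noteq> 0 \<Longrightarrow> 0 < v \<bullet> (M *v v)"
  obtains lam where "0 < lam" "\<And>v. lam * (norm v)\<^sup>2 \<le> v \<bullet> (M *v v)"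
proof -
  let ?q = "\<lambda>v. v \<bullet> (M *v v)"
  have "continuous_on (sphere 0 1) ?q"
    by (intro continuous_intros linear_continuous_on matrix_vector_mul_bounded_linear)
  moreover have "sphere (0 :: real ^ 'n) 1 \<noteq> {}" by simp
  ultimately obtain v0 where v0: "v0 \<in> sphere 0 1" and min: "\<And>v. v \<in> sphere 0 1 \<Longrightarrow> ?q v0 \<le> ?q v"
    using continuous_attains_inf[OF compact_sphere] by blast
  have "?q v0 * (norm v)\<^sup>2 \<le> ?q v" for v
  proof (cases "v = 0")
    case False
    define u where "u = v /\<^sub>R norm v"
    have "?q (norm v *\<^sub>R u) = (norm v)\<^sup>2 * ?q u"
      by (simp add: matrix_vector_mult_scaleR power2_eq_square)
    moreover have "norm v *\<^sub>R u = v" using False by (simp add: u_def)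
    ultimately have "?q v = (norm v)\<^sup>2 * ?q u" by simp
    moreover have "?q v0 \<le> ?q u" using False by (intro min) (simp add: u_def)
    ultimately show ?thesis by (simp add: mult_right_mono mult.commute)
  qed simp
  moreover have "0 < ?q v0" using v0 by (intro pos) auto
  ultimately show ?thesis using that by blast
qed

lemma borel_measurable_vector_matrix_inv:
  fixes M :: "'a \<Rightarrow> real ^ 'n ^ 'n"
  assumes inv: "\<And>x. invertible (M x)"
    and M [measurable]: "\<And>i j. (\<lambda>x. M x $ i $ j) \<in> borel_measurable N"
    and w [measurable]: "w \<in> borel_measurable N"
  shows "(\<lambda>x. w x v* matrix_inv (M x)) \<in> borel_measurable N"
proof -
  have w_nth [measurable]: "(\<lambda>x. w x $ i) \<in> borel_measurable N" for i
    using w by (simp add: borel_measurable_vec_iff)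
  have transpose_nth [measurable]: "(\<lambda>x. transpose (M x) $ i $ j) \<in> borel_measurable N" for i j
    by (simp add: transpose_def)
  have "w x v* matrix_inv (M x) =
      (\<chi> k. det (\<chi> i j. if j = k then w x $ i else transpose (M x) $ i $ j) / det (transpose (M x)))"
    for x
  proof (rule cramer[THEN iffD1])
    show "det (transpose (M x)) \<noteq> 0" using inv[of x] by (simp add: invertible_det_nz det_transpose)
    show "transpose (M x) *v (w x v* matrix_inv (M x)) = w x"
      by (simp add: vector_matrix_mul_assoc matrix_inv_mult[OF inv])
  qed
  moreover have "(\<lambda>x. det (\<chi> i j. if j = k then w x $ i else transpose (M x) $ i $ j) / det (transpose (M x)))
      \<in> borel_measurable N" for k
    by (intro borel_measurable_divide borel_measurable_det) simp_all
  ultimately show ?thesis by (simp add: borel_measurable_vec_iff)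
qed

lemma centered_gaussian_process_reindex:
  fixes f :: "'j \<Rightarrow> 'i"
  assumes X: "centered_gaussian_process M I X R" and inj: "inj_on f J" and f: "f ` J \<subseteq> I"
    and Y: "\<And>t. t \<in> J \<Longrightarrow> Y t = X (f t)"
    and S: "\<And>s t. s \<in> J \<Longrightarrow> t \<in> J \<Longrightarrow> S s t = R (f s) (f t)"
  shows "centered_gaussian_process M J Y S"
  unfolding centered_gaussian_process_def
proof (intro conjI ballI allI impI)
  fix t assume "t \<in> J"
  then show "Y t \<in> borel_measurable M"
    using X f Y by (auto simp: centered_gaussian_process_def)
next
  fix J' and c :: "'j \<Rightarrow> real"
  assume J': "finite J' \<and> J' \<subseteq> J"
  then have inj': "inj_on f J'" using inj_on_subset[OF inj] by blast
  define c' where "c' u = c (the_inv_into J' f u)" for u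
  have c': "c' (f t) = c t" if "t \<in> J'" for t
    using that by (simp add: c'_def the_inv_into_f_f[OF inj'])
  have "finite (f ` J') \<and> f ` J' \<subseteq> I" using J' f by auto
  with X have "real_gaussian M (\<lambda>w. \<Sum>u\<in>f ` J'. c' u * X u w) 0
      (\<Sum>u\<in>f ` J'. \<Sum>v\<in>f ` J'. c' u * c' v * R u v)"
    unfolding centered_gaussian_process_def by blast
  moreover have "(\<lambda>w. \<Sum>u\<in>f ` J'. c' u * X u w) = (\<lambda>w. \<Sum>t\<in>J'. c t * Y t w)"
    using J' by (simp add: sum.reindex[OF inj'] c' Y subset_iff)
  moreover have "(\<Sum>u\<in>f ` J'. \<Sum>v\<in>f ` J'. c' u * c' v * R u v) = (\<Sum>s\<in>J'. \<Sum>t\<in>J'. c s * c t * S s t)"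
    using J' by (simp add: sum.reindex[OF inj'] c' S subset_iff)
  ultimately show "real_gaussian M (\<lambda>w. \<Sum>t\<in>J'. c t * Y t w) 0 (\<Sum>s\<in>J'. \<Sum>t\<in>J'. c s * c t * S s t)"
    by simp
qed

section \<open>Scanning families\<close>

lemma abs_cont_fun_isCont:
  assumes "abs_cont_fun g"
  shows "isCont g t"
  unfolding continuous_at_eps_delta
proof (intro allI impI)
  fix e :: real assume "0 < e"
  obtain d where "0 < d" and d: "\<forall>n (a :: nat \<Rightarrow> real) (b :: nat \<Rightarrow> real). (\<forall>i<n. a i \<le> b i) \<and>
      (\<forall>i<n. \<forall>j<n. i \<noteq> j \<longrightarrow> {a i<..<b i} \<inter> {a j<..<b j} = {}) \<and> (\<Sum>i<n. b i - a i) < d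
      \<longrightarrow> (\<Sum>i<n. \<bar>g (b i) - g (a i)\<bar>) < e"
    using assms[unfolded abs_cont_fun_def, rule_format, OF \<open>0 < e\<close>] by (elim exE conjE)
  have "dist (g x) (g t) < e" if "dist x t < d" for x
  proof -
    have "max x t - min x t = dist x t" by (simp add: dist_real_def)
    then have "\<bar>g (max x t) - g (min x t)\<bar> < e"
      using that d[rule_format, of 1 "\<lambda>_. min x t" "\<lambda>_. max x t"] by simp
    moreover have "\<bar>g (max x t) - g (min x t)\<bar> = dist (g x) (g t)"
      by (cases "x \<le> t") (simp_all add: dist_real_def abs_minus_commute max_def min_def)
    ultimately show ?thesis by simp
  qed
  with \<open>0 < d\<close> show "\<exists>d>0. \<forall>x. dist x t < d \<longrightarrow> dist (g x) (g t) < e" by blast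
qed

lemma mono_Union_real_nat:
  fixes A :: "real \<Rightarrow> 'a set"
  assumes "mono A"
  shows "(\<Union>z. A z) = (\<Union>n::nat. A (real n))"
proof -
  have "x \<in> (\<Union>n::nat. A (real n))" if "x \<in> A z" for x z
  proof -
    obtain n :: nat where "z \<le> real n" using real_arch_simple by blast
    then show ?thesis using that monoD[OF assms] by blast
  qed
  then show ?thesis by blast
qed

lemma mono_Inter_real_nat:
  fixes A :: "real \<Rightarrow> 'a set"
  assumes "mono A"
  shows "(\<Inter>z. A z) = (\<Inter>n::nat. A (- real n))"
proof -
  have "x \<in> A z" if "x \<in> (\<Inter>n::nat. A (- real n))" for x z
  proof -
    obtain n :: nat where "- z \<le> real n" using real_arch_simple by blast
    then have "A (- real n) \<subseteq> A z" using monoD[OF assms] by simp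
    then show ?thesis using that by blast
  qed
  then show ?thesis by blast
qed

locale scanning_setup =
  fixes H :: "'a measure" and mu :: "'a \<Rightarrow> real ^ 'q" and A :: "real \<Rightarrow> 'a set"
  assumes prob_space_H: "prob_space H" and space_H [simp]: "space H = UNIV"
    and mu_L2: "\<And>i. (\<lambda>x. mu x $ i) \<in> L2 H"
    and scanning: "scanning_family H A"
    and invertible_Cmat: "\<And>z. invertible (Cmat H mu A z)"
begin

sublocale prob_space H by (fact prob_space_H)

lemma sets_Compl [measurable]: "S \<in> sets H \<Longrightarrow> - S \<in> sets H"
  using sets.compl_sets[of S H] by (simp add: Compl_eq_Diff_UNIV)

lemma sets_A [measurable]: "A z \<in> sets H"
  and mono_A: "mono A"
  using scanning by (simp_all add: scanning_family_def)

text \<open>\<^term>\<open>zfun A x\<close> is a genuine infimum only on \<open>zdom\<close>; elsewhere it is one of the junk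
  values \<^term>\<open>Inf (UNIV :: real set)\<close> or \<^term>\<open>Inf ({} :: real set)\<close>.\<close>
definition zdom :: "'a set" where
  "zdom = (\<Union>z. A z) - (\<Inter>z. A z)"

lemma sets_Union_A [measurable]: "(\<Union>z. A z) \<in> sets H"
proof -
  have "(\<Union>n::nat. A (real n)) \<in> sets H" by (intro sets.countable_UN) auto
  then show ?thesis by (simp only: mono_Union_real_nat[OF mono_A])
qed

lemma sets_Inter_A [measurable]: "(\<Inter>z. A z) \<in> sets H"
proof -
  have "(\<Inter>n::nat. A (- real n)) \<in> sets H" by (intro sets.countable_INT) auto
  then show ?thesis by (simp only: mono_Inter_real_nat[OF mono_A])
qed

lemma sets_zdom [measurable]: "zdom \<in> sets H"
  unfolding zdom_def by (intro sets.Diff sets_Union_A sets_Inter_A)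

lemma AE_zdom: "AE x in H. x \<in> zdom"
proof -
  have "prob (\<Union>z. A z) = 1" and "prob (\<Inter>z. A z) = 0"
    using scanning by (simp_all only: scanning_family_def)
  have "AE x in H. x \<in> (\<Union>z. A z)" by (rule AE_prob_1) fact
  moreover have "(\<Inter>z. A z) \<in> null_sets H"
    using sets_Inter_A \<open>prob (\<Inter>z. A z) = 0\<close> by (simp only: null_sets_def emeasure_eq_measure) simp
  then have "AE x in H. x \<notin> (\<Inter>z. A z)" by (rule AE_not_in)
  ultimately show ?thesis unfolding zdom_def by eventually_elim (rule DiffI)
qed

lemma zfun_le: "x \<in> zdom \<Longrightarrow> x \<in> A t \<Longrightarrow> zfun A x \<le> t"
proof -
  assume "x \<in> zdom" "x \<in> A t"
  then obtain s where s: "x \<notin> A s" by (auto simp: zdom_def)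
  have "s \<le> z" if "x \<in> A z" for z
    using s that monoD[OF mono_A, of z s] by (cases "z \<le> s") auto
  then have "bdd_below {z. x \<in> A z}" by (intro bdd_belowI) blast
  then show ?thesis unfolding zfun_def using \<open>x \<in> A t\<close> by (intro cInf_lower) auto
qed

lemma mem_A_if_zfun_less:
  assumes "x \<in> zdom" "zfun A x < t"
  shows "x \<in> A t"
proof -
  from assms(1) have "{z. x \<in> A z} \<noteq> {}" by (auto simp: zdom_def)
  from cInf_lessD[OF this assms(2)[unfolded zfun_def]] obtain s where "x \<in> A s" "s < t"
    by blast
  moreover have "A s \<subseteq> A t" using monoD[OF mono_A] \<open>s < t\<close> by simp
  ultimately show ?thesis by blast
qed

lemma zfun_less_iff:
  assumes "x \<in> zdom"
  shows "zfun A x < a \<longleftrightarrow> (\<exists>n. x \<in> A (a - 1 / Suc n))"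
proof
  assume "zfun A x < a"
  then obtain n where "inverse (Suc n) < a - zfun A x"
    using reals_Archimedean[of "a - zfun A x"] by auto
  then show "\<exists>n. x \<in> A (a - 1 / Suc n)"
    using assms by (intro exI[of _ n] mem_A_if_zfun_less) (simp_all add: inverse_eq_divide)
next
  assume "\<exists>n. x \<in> A (a - 1 / Suc n)"
  then obtain n where "zfun A x \<le> a - 1 / Suc n" using zfun_le[OF assms] by blast
  moreover have "0 < 1 / real (Suc n)" by simp
  ultimately show "zfun A x < a" by linarith
qed

lemma zfun_Inter_A: "x \<in> (\<Inter>z. A z) \<Longrightarrow> zfun A x = Inf UNIV"
  and zfun_not_Union_A: "x \<notin> (\<Union>z. A z) \<Longrightarrow> zfun A x = Inf {}"
proof -
  show "x \<in> (\<Inter>z. A z) \<Longrightarrow> zfun A x = Inf UNIV"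
    by (simp add: zfun_def)
  show "x \<notin> (\<Union>z. A z) \<Longrightarrow> zfun A x = Inf {}"
    by (simp add: zfun_def)
qed

lemma zfun_less_eq:
  "{x \<in> space H. zfun A x < a} = (zdom \<inter> (\<Union>n. A (a - 1 / Suc n)))
      \<union> (if Inf (UNIV :: real set) < a then \<Inter>z. A z else {})
      \<union> (if Inf ({} :: real set) < a then - (\<Union>z. A z) else {})"
proof (intro set_eqI)
  fix x
  show "x \<in> {x \<in> space H. zfun A x < a} \<longleftrightarrow> x \<in> (zdom \<inter> (\<Union>n. A (a - 1 / Suc n)))
      \<union> (if Inf (UNIV :: real set) < a then \<Inter>z. A z else {})
      \<union> (if Inf ({} :: real set) < a then - (\<Union>z. A z) else {})"
  proof (cases "x \<in> zdom")
    case True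
    then have "x \<notin> (if Inf (UNIV :: real set) < a then \<Inter>z. A z else {})"
      and "x \<notin> (if Inf ({} :: real set) < a then - (\<Union>z. A z) else {})"
      unfolding zdom_def by auto
    moreover have "zfun A x < a \<longleftrightarrow> x \<in> zdom \<inter> (\<Union>n. A (a - 1 / Suc n))"
      using zfun_less_iff[OF True] True by blast
    ultimately show ?thesis by auto
  next
    case False
    then consider "x \<in> (\<Inter>z. A z)" | "x \<notin> (\<Union>z. A z)" unfolding zdom_def by blast
    then show ?thesis
    proof cases
      case 1
      then have "x \<in> (\<Union>z. A z)" by blast
      with 1 False show ?thesis using zfun_Inter_A[OF 1] by simp
    next
      case 2
      then have "x \<notin> (\<Inter>z. A z)" by blast
      with 2 False show ?thesis using zfun_not_Union_A[OF 2] by simp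
    qed
  qed
qed

lemma borel_measurable_zfun [measurable]: "zfun A \<in> borel_measurable H"
proof (subst borel_measurable_iff_less, intro allI)
  fix a
  have "zdom \<inter> (\<Union>n. A (a - 1 / Suc n)) \<in> sets H" by measurable
  moreover have "- (\<Union>z. A z) \<in> sets H" by measurable
  ultimately have "(zdom \<inter> (\<Union>n. A (a - 1 / Suc n)))
      \<union> (if Inf (UNIV :: real set) < a then \<Inter>z. A z else {})
      \<union> (if Inf ({} :: real set) < a then - (\<Union>z. A z) else {}) \<in> sets H"
    by simp
  then show "{x \<in> space H. zfun A x < a} \<in> sets H"
    unfolding zfun_less_eq .
qed

lemma continuous_measure_A: "isCont (\<lambda>z. measure H (A z)) t"
  using scanning by (simp add: scanning_family_def abs_cont_fun_isCont)

lemma AE_zfun_neq: "AE y in H. zfun A y \<noteq> t"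
proof -
  define S where "S = {y \<in> zdom. zfun A y = t}"
  have S: "S \<in> sets H" unfolding S_def by measurable
  have "measure H S \<le> measure H (A (t + d)) - measure H (A (t - d))" if "0 < d" for d
  proof -
    have "S \<subseteq> A (t + d) - A (t - d)"
    proof
      fix y assume "y \<in> S"
      then have y: "y \<in> zdom" "zfun A y = t" by (simp_all add: S_def)
      then have "y \<in> A (t + d)" using \<open>0 < d\<close> by (intro mem_A_if_zfun_less) simp_all
      moreover have "y \<notin> A (t - d)" using zfun_le[OF y(1)] y(2) \<open>0 < d\<close> by force
      ultimately show "y \<in> A (t + d) - A (t - d)" by blast
    qed
    then have "measure H S \<le> measure H (A (t + d) - A (t - d))"
      by (intro finite_measure_mono) simp_all
    also have "\<dots> = measure H (A (t + d)) - measure H (A (t - d))"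
      using monoD[OF mono_A, of "t - d" "t + d"] that by (intro finite_measure_Diff) auto
    finally show ?thesis .
  qed
  moreover have "((\<lambda>d. measure H (A (t + d)) - measure H (A (t - d))) \<longlongrightarrow>
      measure H (A (t + 0)) - measure H (A (t - 0))) (at_right 0)"
    by (intro tendsto_intros isCont_tendsto_compose[OF continuous_measure_A])
  ultimately have "measure H S \<le> 0"
    by (intro tendsto_le[OF trivial_limit_at_right_real _ tendsto_const])
      (auto simp: eventually_at_right_field intro!: exI[of _ 1])
  then have "S \<in> null_sets H"
    using S measure_nonneg[of H S] by (simp add: null_sets_def emeasure_eq_measure)
  then have "AE y in H. y \<notin> S" by (rule AE_not_in)
  with AE_zdom show ?thesis unfolding S_def by eventually_elim auto
qed

lemma AE_mem_A_iff: "AE y in H. y \<in> A t \<longleftrightarrow> zfun A y \<le> t"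
  using AE_zdom AE_zfun_neq[of t]
proof eventually_elim
  case (elim y)
  then show ?case
    using zfun_le[OF elim(1)] mem_A_if_zfun_less[OF elim(1)] by (auto simp: order_le_less)
qed

lemma AE_not_mem_A_iff: "AE y in H. y \<notin> A t \<longleftrightarrow> t \<le> zfun A y"
  using AE_mem_A_iff[of t] AE_zfun_neq[of t] by eventually_elim auto

lemma borel_measurable_mu_nth [measurable]: "(\<lambda>x. mu x $ i) \<in> borel_measurable H"
  using mu_L2 by (rule L2_measurable)

lemma borel_measurable_mu [measurable]: "mu \<in> borel_measurable H"
  using borel_measurable_mu_nth borel_measurable_vec_iff by blast

lemma L2_norm_mu: "(\<lambda>x. norm (mu x)) \<in> L2 H"
proof -
  have "(\<lambda>x. (norm (mu x))\<^sup>2) = (\<lambda>x. \<Sum>i\<in>UNIV. (mu x $ i)\<^sup>2)"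
    by (simp add: norm_vec_def L2_set_def sum_nonneg)
  moreover have "integrable H (\<lambda>x. \<Sum>i\<in>UNIV. (mu x $ i)\<^sup>2)"
    using mu_L2 by (intro Bochner_Integration.integrable_sum) (simp add: L2_integrable_sq)
  ultimately show ?thesis by (simp add: L2_def)
qed

lemma L2_inner_mu: "(\<lambda>x. v \<bullet> mu x) \<in> L2 H"
proof -
  have "integrable H (\<lambda>x. (v \<bullet> mu x)\<^sup>2)"
  proof (rule Bochner_Integration.integrable_bound)
    show "integrable H (\<lambda>x. (norm v)\<^sup>2 * (norm (mu x))\<^sup>2)"
      using L2_norm_mu by (simp add: L2_integrable_sq)
    show "AE x in H. norm ((v \<bullet> mu x)\<^sup>2) \<le> norm ((norm v)\<^sup>2 * (norm (mu x))\<^sup>2)"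
    proof (rule AE_I2)
      fix x
      have "\<bar>v \<bullet> mu x\<bar>\<^sup>2 \<le> (norm v * norm (mu x))\<^sup>2"
        by (rule power_mono[OF Cauchy_Schwarz_ineq2 abs_ge_zero])
      then show "norm ((v \<bullet> mu x)\<^sup>2) \<le> norm ((norm v)\<^sup>2 * (norm (mu x))\<^sup>2)"
        by (simp add: power_mult_distrib)
    qed
  qed simp
  then show ?thesis by (simp add: L2_def)
qed

section \<open>The matrices \<open>C\<^sub>z\<close>\<close>

abbreviation C :: "real \<Rightarrow> real ^ 'q ^ 'q" where
  "C \<equiv> Cmat H mu A"

lemma integrable_outer_mu: "integrable H (\<lambda>y. outer (mu y))"
  by (intro integrable_vecI) (simp add: outer_def L2_mult_integrable[OF mu_L2 mu_L2])

lemma Cmat_bilinear: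
  "w \<bullet> (C t *v v) = (\<integral>y. (if t \<le> zfun A y then (w \<bullet> mu y) * (mu y \<bullet> v) else 0) \<partial>H)"
proof -
  have "integrable H (\<lambda>y. indicator (- A t) y *\<^sub>R outer (mu y))"
    by (rule integrable_mult_indicator[OF _ integrable_outer_mu]) measurable
  then have "w \<bullet> (C t *v v) = (\<integral>y. w \<bullet> ((indicator (- A t) y *\<^sub>R outer (mu y)) *v v) \<partial>H)"
    unfolding Cmat_def set_lebesgue_integral_def
    by (rule integral_bounded_linear[OF bounded_linear_inner_matrix_vector, symmetric])
  also have "\<dots> = (\<integral>y. indicator (- A t) y * ((w \<bullet> mu y) * (mu y \<bullet> v)) \<partial>H)"
    by (simp only: scaleR_matrix_vector_mult outer_mult_vector inner_scaleR_right real_scaleR_def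
        mult.commute[of "mu _ \<bullet> v"])
  also have "\<dots> = (\<integral>y. (if t \<le> zfun A y then (w \<bullet> mu y) * (mu y \<bullet> v) else 0) \<partial>H)"
  proof (rule integral_cong_AE)
    show "AE y in H. indicator (- A t) y * ((w \<bullet> mu y) * (mu y \<bullet> v))
        = (if t \<le> zfun A y then (w \<bullet> mu y) * (mu y \<bullet> v) else 0)"
      using AE_not_mem_A_iff[of t] by eventually_elim (simp add: indicator_def)
  qed simp_all
  finally show ?thesis .
qed

lemma integrable_Cmat_integrand:
  "integrable H (\<lambda>y. if t \<le> zfun A y then (w \<bullet> mu y) * (mu y \<bullet> v) else 0)"
proof -
  have "integrable H (\<lambda>y. (w \<bullet> mu y) * (mu y \<bullet> v))"
    using L2_mult_integrable[OF L2_inner_mu L2_inner_mu, of w v] by (simp add: inner_commute)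
  then show ?thesis by (rule integrable_if_zero) measurable
qed

lemma Cmat_symmetric: "w \<bullet> (C t *v v) = v \<bullet> (C t *v w)"
  unfolding Cmat_bilinear
  by (rule Bochner_Integration.integral_cong) (simp_all add: inner_commute[of w] inner_commute[of _ v] mult.commute)

lemma Cmat_quadratic_antimono: "s \<le> t \<Longrightarrow> v \<bullet> (C t *v v) \<le> v \<bullet> (C s *v v)"
  unfolding Cmat_bilinear
  by (intro integral_mono integrable_Cmat_integrand) (auto simp: inner_commute)

lemma Cmat_pos_def: "v \<noteq> 0 \<Longrightarrow> 0 < v \<bullet> (C t *v v)"
proof -
  assume "v \<noteq> 0"
  have sq: "(v \<bullet> mu y) * (mu y \<bullet> v) = (mu y \<bullet> v)\<^sup>2" for y
    by (simp add: inner_commute power2_eq_square)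
  have int: "integrable H (\<lambda>y. if t \<le> zfun A y then (mu y \<bullet> v)\<^sup>2 else 0)"
    using integrable_Cmat_integrand[of t v v] by (simp only: sq)
  have quad: "v \<bullet> (C t *v v) = (\<integral>y. (if t \<le> zfun A y then (mu y \<bullet> v)\<^sup>2 else 0) \<partial>H)"
    unfolding Cmat_bilinear sq ..
  have "v \<bullet> (C t *v v) \<noteq> 0"
  proof
    assume "v \<bullet> (C t *v v) = 0"
    moreover have "AE y in H. 0 \<le> (if t \<le> zfun A y then (mu y \<bullet> v)\<^sup>2 else 0)" by simp
    ultimately have "AE y in H. (if t \<le> zfun A y then (mu y \<bullet> v)\<^sup>2 else 0) = 0"
      using integral_nonneg_eq_0_iff_AE[OF int] quad by simp
    then have "AE y in H. (if t \<le> zfun A y then (w \<bullet> mu y) * (mu y \<bullet> v) else 0) = 0" for w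
      by eventually_elim (simp split: if_splits)
    then have "w \<bullet> (C t *v v) = 0" for w
      unfolding Cmat_bilinear by (rule integral_eq_zero_AE)
    from this[of "C t *v v"] have "C t *v v = C t *v 0" by simp
    with \<open>v \<noteq> 0\<close> show False
      using injD[OF inj_matrix_vector_mult[OF invertible_Cmat]] by blast
  qed
  moreover have "0 \<le> v \<bullet> (C t *v v)" unfolding quad by (rule integral_nonneg_AE) auto
  ultimately show ?thesis by simp
qed

lemma Cmat_mult_vector_matrix_inv: "C t *v (w v* matrix_inv (C t)) = w"
proof -
  have "u \<bullet> (C t *v (w v* matrix_inv (C t))) = u \<bullet> w" for u
  proof -
    have "u \<bullet> (C t *v (w v* matrix_inv (C t))) = w \<bullet> (matrix_inv (C t) *v (C t *v u))"
      by (simp add: Cmat_symmetric[of u] dot_lmul_matrix)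
    also have "\<dots> = w \<bullet> u"
      by (simp add: matrix_vector_mul_assoc matrix_inv_mult[OF invertible_Cmat])
    finally show ?thesis by (simp add: inner_commute)
  qed
  then show ?thesis by (subst vector_eq_ldot[symmetric]) blast
qed

lemma borel_measurable_Cmat_nth [measurable]: "(\<lambda>t. C t $ i $ j) \<in> borel_measurable borel"
proof -
  have axis_i: "axis i 1 \<bullet> u = u $ i" and axis_j: "u \<bullet> axis j 1 = u $ j" for u :: "real ^ 'q"
    by (simp_all add: inner_axis inner_axis')
  have "C t $ i $ j = (\<integral>y. (if t \<le> zfun A y then mu y $ i * mu y $ j else 0) \<partial>H)" for t
  proof -
    have "C t $ i $ j = axis i 1 \<bullet> (C t *v axis j 1)"
      by (simp add: matrix_vector_mult_basis column_def axis_i)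
    also have "\<dots> = (\<integral>y. (if t \<le> zfun A y then mu y $ i * mu y $ j else 0) \<partial>H)"
      unfolding Cmat_bilinear axis_i axis_j ..
    finally show ?thesis .
  qed
  moreover have "(\<lambda>(t, y). if t \<le> zfun A y then mu y $ i * mu y $ j else 0) \<in> borel_measurable (borel \<Otimes>\<^sub>M H)"
  proof -
    have [measurable]: "(\<lambda>p. zfun A (snd p)) \<in> borel_measurable (borel \<Otimes>\<^sub>M H)"
      and [measurable]: "(\<lambda>p. mu (snd p) $ i * mu (snd p) $ j) \<in> borel_measurable (borel \<Otimes>\<^sub>M H)"
      by (rule measurable_compose[OF measurable_snd], measurable)+
    show ?thesis unfolding case_prod_beta by measurable
  qed
  ultimately show ?thesis by simp
qed

definition psi :: "'a \<Rightarrow> real ^ 'q" where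
  "psi y = mu y v* matrix_inv (C (zfun A y))"

lemma borel_measurable_psi [measurable]: "psi \<in> borel_measurable H"
  unfolding psi_def by (rule borel_measurable_vector_matrix_inv) (simp_all add: invertible_Cmat)

lemma Cmat_mult_psi: "C (zfun A y) *v psi y = mu y"
  unfolding psi_def by (rule Cmat_mult_vector_matrix_inv)

lemma norm_psi_bound:
  obtains lam where "0 < lam" "\<And>y. zfun A y \<le> z0 \<Longrightarrow> lam * norm (psi y) \<le> norm (mu y)"
proof -
  obtain lam where lam: "0 < lam" "\<And>v. lam * (norm v)\<^sup>2 \<le> v \<bullet> (C z0 *v v)"
    using quadratic_form_coercive[OF Cmat_pos_def] by blast
  have "lam * norm (psi y) \<le> norm (mu y)" if "zfun A y \<le> z0" for y
  proof -
    have "lam * (norm (psi y))\<^sup>2 \<le> psi y \<bullet> (C (zfun A y) *v psi y)"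
      using lam(2) Cmat_quadratic_antimono[OF that] by (rule order_trans)
    also have "\<dots> \<le> norm (psi y) * norm (mu y)"
      unfolding Cmat_mult_psi by (rule norm_cauchy_schwarz)
    finally show ?thesis
      using lam(1) by (cases "psi y = 0") (simp_all add: power2_eq_square)
  qed
  with lam(1) show ?thesis by (rule that)
qed

section \<open>The operator \<open>T\<close> on functions vanishing above a level\<close>

definition trunc :: "('a \<Rightarrow> real) \<Rightarrow> real \<Rightarrow> 'a \<Rightarrow> real" where
  "trunc g s y = (if zfun A y \<le> s then g y else 0)"

definition vanishes_above :: "('a \<Rightarrow> real) \<Rightarrow> real \<Rightarrow> bool" where
  "vanishes_above g s \<longleftrightarrow> (\<forall>y. g y \<noteq> 0 \<longrightarrow> zfun A y \<le> s)"

definition Tcoef :: "('a \<Rightarrow> real) \<Rightarrow> real \<Rightarrow> real ^ 'q" where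
  "Tcoef g s = (\<integral>y. trunc g s y *\<^sub>R psi y \<partial>H)"

lemma vanishes_above_trunc: "vanishes_above (trunc g s) s"
  by (simp add: vanishes_above_def trunc_def)

lemma trunc_trunc: "t \<le> s \<Longrightarrow> trunc (trunc g s) t = trunc g t"
  by (auto simp: trunc_def fun_eq_iff)

lemma L2_trunc:
  assumes "g \<in> L2 H"
  shows "trunc g s \<in> L2 H"
proof -
  have [measurable]: "g \<in> borel_measurable H" using assms by (rule L2_measurable)
  have "integrable H (\<lambda>y. (trunc g s y)\<^sup>2)"
  proof (rule Bochner_Integration.integrable_bound)
    show "integrable H (\<lambda>y. (g y)\<^sup>2)" using assms by (rule L2_integrable_sq)
    show "AE y in H. norm ((trunc g s y)\<^sup>2) \<le> norm ((g y)\<^sup>2)" by (simp add: trunc_def)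
  qed (simp add: trunc_def)
  moreover have "trunc g s \<in> borel_measurable H" unfolding trunc_def by measurable
  ultimately show ?thesis by (simp add: L2_def)
qed

lemma integral_trunc_sq_le:
  assumes "g \<in> L2 H"
  shows "(\<integral>x. (trunc g s x)\<^sup>2 \<partial>H) \<le> (\<integral>x. (g x)\<^sup>2 \<partial>H)"
  using L2_integrable_sq[OF L2_trunc[OF assms]] L2_integrable_sq[OF assms]
  by (rule integral_mono) (simp add: trunc_def)

lemma integrable_scaleR_psi:
  assumes g: "g \<in> L2 H" and van: "vanishes_above g s"
  shows "integrable H (\<lambda>y. g y *\<^sub>R psi y)"
proof -
  obtain lam where lam: "0 < lam" "\<And>y. zfun A y \<le> s \<Longrightarrow> lam * norm (psi y) \<le> norm (mu y)"
    using norm_psi_bound by blast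
  have bound: "norm (g y *\<^sub>R psi y) \<le> \<bar>g y\<bar> * norm (mu y) / lam" for y
  proof (cases "g y = 0")
    case False
    then have "norm (psi y) \<le> norm (mu y) / lam"
      using van lam by (simp add: vanishes_above_def field_simps mult.commute)
    then show ?thesis by (simp add: mult_left_mono divide_inverse mult.assoc)
  qed simp
  show ?thesis
  proof (rule Bochner_Integration.integrable_bound)
    show "integrable H (\<lambda>y. \<bar>g y\<bar> * norm (mu y) / lam)"
      using L2_mult_integrable[OF L2_abs[OF g] L2_norm_mu] by simp
    show "AE y in H. norm (g y *\<^sub>R psi y) \<le> norm (\<bar>g y\<bar> * norm (mu y) / lam)"
      using bound lam(1) by (intro AE_I2) simp
    show "(\<lambda>y. g y *\<^sub>R psi y) \<in> borel_measurable H" using L2_measurable[OF g] by measurable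
  qed
qed

lemma integrable_trunc_scaleR_psi: "g \<in> L2 H \<Longrightarrow> integrable H (\<lambda>y. trunc g s y *\<^sub>R psi y)"
  by (rule integrable_scaleR_psi[OF L2_trunc vanishes_above_trunc])

lemma Top_eq:
  assumes g: "g \<in> L2 H"
  shows "Top H mu A g x = Tcoef g (zfun A x) \<bullet> mu x"
proof -
  have [measurable]: "g \<in> borel_measurable H" using g by (rule L2_measurable)
  have "(LINT y:A (zfun A x)|H. g y *\<^sub>R (mu y v* matrix_inv (C (zfun A y)))) = Tcoef g (zfun A x)"
    unfolding set_lebesgue_integral_def Tcoef_def psi_def[symmetric]
  proof (rule integral_cong_AE)
    show "AE y in H. indicator (A (zfun A x)) y *\<^sub>R g y *\<^sub>R psi y = trunc g (zfun A x) y *\<^sub>R psi y"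
      using AE_mem_A_iff[of "zfun A x"] by eventually_elim (simp add: trunc_def indicator_def)
  qed (simp_all add: trunc_def)
  then show ?thesis by (simp add: Top_def)
qed

lemma Tcoef_lincomb:
  assumes "g1 \<in> L2 H" "g2 \<in> L2 H"
  shows "Tcoef (\<lambda>x. a * g1 x + c * g2 x) t = a *\<^sub>R Tcoef g1 t + c *\<^sub>R Tcoef g2 t"
proof -
  have "Tcoef (\<lambda>x. a * g1 x + c * g2 x) t
      = (\<integral>y. a *\<^sub>R (trunc g1 t y *\<^sub>R psi y) + c *\<^sub>R (trunc g2 t y *\<^sub>R psi y) \<partial>H)"
    unfolding Tcoef_def by (rule Bochner_Integration.integral_cong) (auto simp: trunc_def scaleR_add_left)
  also have "\<dots> = (\<integral>y. a *\<^sub>R (trunc g1 t y *\<^sub>R psi y) \<partial>H) + (\<integral>y. c *\<^sub>R (trunc g2 t y *\<^sub>R psi y) \<partial>H)"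
    using assms by (intro Bochner_Integration.integral_add integrable_scaleR_right integrable_trunc_scaleR_psi)
  finally show ?thesis by (simp only: Tcoef_def integral_scaleR_right)
qed

lemma Top_lincomb:
  assumes "g1 \<in> L2 H" "g2 \<in> L2 H"
  shows "Top H mu A (\<lambda>x. a * g1 x + c * g2 x) x = a * Top H mu A g1 x + c * Top H mu A g2 x"
  using assms L2_lincomb[OF assms, of a c]
  by (simp add: Top_eq Tcoef_lincomb inner_add_left)

lemma borel_measurable_Tcoef:
  assumes "g \<in> L2 H"
  shows "(\<lambda>t. Tcoef g t) \<in> borel_measurable borel"
  unfolding Tcoef_def
proof (rule borel_measurable_lebesgue_integral)
  have [measurable]: "g \<in> borel_measurable H" using assms by (rule L2_measurable)
  have [measurable]: "(\<lambda>p. zfun A (snd p)) \<in> borel_measurable (borel \<Otimes>\<^sub>M H)"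
    and [measurable]: "(\<lambda>p. g (snd p)) \<in> borel_measurable (borel \<Otimes>\<^sub>M H)"
    and [measurable]: "(\<lambda>p. psi (snd p)) \<in> borel_measurable (borel \<Otimes>\<^sub>M H)"
    by (rule measurable_compose[OF measurable_snd], measurable)+
  show "(\<lambda>(t, y). trunc g t y *\<^sub>R psi y) \<in> borel_measurable (borel \<Otimes>\<^sub>M H)"
    unfolding trunc_def case_prod_beta by measurable
qed

lemma borel_measurable_Top:
  assumes "g \<in> L2 H"
  shows "Top H mu A g \<in> borel_measurable H"
proof -
  have [measurable]: "(\<lambda>t. Tcoef g t) \<in> borel_measurable borel"
    using assms by (rule borel_measurable_Tcoef)
  have "Top H mu A g = (\<lambda>x. Tcoef g (zfun A x) \<bullet> mu x)"
    using Top_eq[OF assms] by (simp add: fun_eq_iff)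
  also have "\<dots> \<in> borel_measurable H" by measurable
  finally show ?thesis .
qed

lemma borel_measurable_Kop:
  assumes "g \<in> L2 H"
  shows "Kop H mu A g \<in> borel_measurable H"
  using borel_measurable_Top[OF assms] L2_measurable[OF assms] unfolding Kop_def by measurable

lemma abs_Top_le:
  assumes g: "g \<in> L2 H" and van: "vanishes_above g s"
  shows "\<bar>Top H mu A g x\<bar> \<le> (\<integral>y. norm (g y *\<^sub>R psi y) \<partial>H) * norm (mu x)"
proof -
  have "norm (Tcoef g t) \<le> (\<integral>y. norm (g y *\<^sub>R psi y) \<partial>H)" for t
  proof -
    have "norm (Tcoef g t) \<le> (\<integral>y. norm (trunc g t y *\<^sub>R psi y) \<partial>H)"
      unfolding Tcoef_def by (rule integral_norm_bound)
    also have "\<dots> \<le> (\<integral>y. norm (g y *\<^sub>R psi y) \<partial>H)"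
      by (rule integral_mono[OF integrable_norm[OF integrable_trunc_scaleR_psi[OF g]]
            integrable_norm[OF integrable_scaleR_psi[OF g van]]]) (simp add: trunc_def)
    finally show ?thesis .
  qed
  then show ?thesis
    unfolding Top_eq[OF g] by (intro order_trans[OF Cauchy_Schwarz_ineq2] mult_right_mono) simp_all
qed

lemma L2_Top:
  assumes g: "g \<in> L2 H" and van: "vanishes_above g s"
  shows "Top H mu A g \<in> L2 H"
proof -
  define K where "K = (\<integral>y. norm (g y *\<^sub>R psi y) \<partial>H)"
  have "integrable H (\<lambda>x. (Top H mu A g x)\<^sup>2)"
  proof (rule Bochner_Integration.integrable_bound)
    show "integrable H (\<lambda>x. K\<^sup>2 * (norm (mu x))\<^sup>2)"
      using L2_integrable_sq[OF L2_norm_mu] by simp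
    show "AE x in H. norm ((Top H mu A g x)\<^sup>2) \<le> norm (K\<^sup>2 * (norm (mu x))\<^sup>2)"
    proof (rule AE_I2)
      fix x
      have "\<bar>Top H mu A g x\<bar>\<^sup>2 \<le> (K * norm (mu x))\<^sup>2"
        unfolding K_def by (rule power_mono[OF abs_Top_le[OF g van] abs_ge_zero])
      then show "norm ((Top H mu A g x)\<^sup>2) \<le> norm (K\<^sup>2 * (norm (mu x))\<^sup>2)"
        by (simp add: power_mult_distrib)
    qed
  qed (use borel_measurable_Top[OF g] in measurable)
  then show ?thesis using borel_measurable_Top[OF g] by (simp add: L2_def)
qed

lemma Fubini_pair_H:
  fixes F :: "'a \<Rightarrow> 'a \<Rightarrow> real"
  assumes F: "(\<lambda>(x, y). F x y) \<in> borel_measurable (H \<Otimes>\<^sub>M H)"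
    and P: "integrable H P" and Q: "integrable H Q" and bound: "\<And>x y. \<bar>F x y\<bar> \<le> P x * Q y"
  shows "(\<integral>x. (\<integral>y. F x y \<partial>H) \<partial>H) = (\<integral>y. (\<integral>x. F x y \<partial>H) \<partial>H)"
    and "integrable H (\<lambda>x. \<integral>y. F x y \<partial>H)"
proof -
  interpret HH: pair_sigma_finite H H
    by (simp add: pair_sigma_finite_def sigma_finite_measure_axioms)
  have "integrable (H \<Otimes>\<^sub>M H) (\<lambda>(x, y). F x y)"
    by (rule HH.integrable_product_bound[OF F P Q]) (simp add: bound)
  from HH.Fubini_integral[OF this]
  show "(\<integral>x. (\<integral>y. F x y \<partial>H) \<partial>H) = (\<integral>y. (\<integral>x. F x y \<partial>H) \<partial>H)" ..
  from HH.integrable_fst'[OF \<open>integrable (H \<Otimes>\<^sub>M H) (\<lambda>(x, y). F x y)\<close>]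
  show "integrable H (\<lambda>x. \<integral>y. F x y \<partial>H)" by simp
qed

lemma borel_measurable_pair_H [measurable]:
  "(\<lambda>p. zfun A (fst p)) \<in> borel_measurable (H \<Otimes>\<^sub>M H)" "(\<lambda>p. zfun A (snd p)) \<in> borel_measurable (H \<Otimes>\<^sub>M H)"
  "(\<lambda>p. mu (fst p)) \<in> borel_measurable (H \<Otimes>\<^sub>M H)" "(\<lambda>p. mu (snd p)) \<in> borel_measurable (H \<Otimes>\<^sub>M H)"
  "(\<lambda>p. psi (fst p)) \<in> borel_measurable (H \<Otimes>\<^sub>M H)" "(\<lambda>p. psi (snd p)) \<in> borel_measurable (H \<Otimes>\<^sub>M H)"
  by (rule measurable_compose[OF measurable_fst] measurable_compose[OF measurable_snd], measurable)+

lemma integrable_norm_mu_sq: "integrable H (\<lambda>x. norm (mu x) * norm (mu x))"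
  using L2_integrable_sq[OF L2_norm_mu] by (simp add: power2_eq_square)

lemma integral_trunc_mult_psi_inner:
  "g \<in> L2 H \<Longrightarrow> (\<integral>y. trunc g t y * (psi y \<bullet> u) \<partial>H) = Tcoef g t \<bullet> u"
  unfolding Tcoef_def using integral_inner_left[OF integrable_trunc_scaleR_psi] by simp

lemma Top_eq_integral:
  "g \<in> L2 H \<Longrightarrow> Top H mu A g x = (\<integral>y. trunc g (zfun A x) y * (psi y \<bullet> mu x) \<partial>H)"
  by (simp add: Top_eq integral_trunc_mult_psi_inner)

text \<open>\<open>Tadj\<close> is the adjoint of \<^term>\<open>Top H mu A\<close> in \<open>L\<^sub>2(H)\<close>.\<close>
definition Tadj :: "('a \<Rightarrow> real) \<Rightarrow> 'a \<Rightarrow> real" where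
  "Tadj h y = (\<integral>x. (if zfun A y \<le> zfun A x then (psi y \<bullet> mu x) * h x else 0) \<partial>H)"

lemma integral_Top_mult:
  assumes g: "g \<in> L2 H" and van: "vanishes_above g s" and h: "h \<in> L2 H"
  shows "(\<integral>x. Top H mu A g x * h x \<partial>H) = (\<integral>y. g y * Tadj h y \<partial>H)"
proof -
  have [measurable]: "g \<in> borel_measurable H" "h \<in> borel_measurable H"
    using g h by (simp_all add: L2_measurable)
  have [measurable]: "(\<lambda>p. h (fst p)) \<in> borel_measurable (H \<Otimes>\<^sub>M H)"
    by (rule measurable_compose[OF measurable_fst], measurable)
  define F where "F x y = (if zfun A y \<le> zfun A x then g y * (psi y \<bullet> mu x) * h x else 0)" for x y
  have "(\<integral>x. (\<integral>y. F x y \<partial>H) \<partial>H) = (\<integral>y. (\<integral>x. F x y \<partial>H) \<partial>H)"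
  proof (rule Fubini_pair_H)
    show "(\<lambda>(x, y). F x y) \<in> borel_measurable (H \<Otimes>\<^sub>M H)"
      unfolding F_def case_prod_beta by measurable
    show "integrable H (\<lambda>x. norm (mu x) * \<bar>h x\<bar>)"
      by (rule L2_mult_integrable[OF L2_norm_mu L2_abs[OF h]])
    show "integrable H (\<lambda>y. norm (g y *\<^sub>R psi y))"
      by (rule integrable_norm[OF integrable_scaleR_psi[OF g van]])
    show "\<bar>F x y\<bar> \<le> norm (mu x) * \<bar>h x\<bar> * norm (g y *\<^sub>R psi y)" for x y
    proof -
      have "\<bar>F x y\<bar> \<le> \<bar>g y\<bar> * \<bar>psi y \<bullet> mu x\<bar> * \<bar>h x\<bar>"
        by (simp add: F_def abs_mult)
      also have "\<dots> \<le> \<bar>g y\<bar> * (norm (psi y) * norm (mu x)) * \<bar>h x\<bar>"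
        by (intro mult_right_mono mult_left_mono Cauchy_Schwarz_ineq2) simp_all
      finally show ?thesis by (simp add: mult_ac)
    qed
  qed
  moreover have "(\<integral>y. F x y \<partial>H) = Top H mu A g x * h x" for x
  proof -
    have "(\<integral>y. F x y \<partial>H) = (\<integral>y. trunc g (zfun A x) y * (psi y \<bullet> mu x) * h x \<partial>H)"
      by (rule Bochner_Integration.integral_cong) (simp_all add: F_def trunc_def)
    then show ?thesis by (simp add: Top_eq_integral[OF g])
  qed
  moreover have "(\<integral>x. F x y \<partial>H) = g y * Tadj h y" for y
    unfolding Tadj_def F_def
    by (subst integral_mult_right_zero[symmetric], rule Bochner_Integration.integral_cong) simp_all
  ultimately show ?thesis by simp
qed

lemma Tadj_inner_mu: "Tadj (\<lambda>x. mu x \<bullet> v) y = mu y \<bullet> v"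
proof -
  have "Tadj (\<lambda>x. mu x \<bullet> v) y = psi y \<bullet> (C (zfun A y) *v v)"
    unfolding Tadj_def Cmat_bilinear ..
  also have "\<dots> = mu y \<bullet> v"
    by (simp add: Cmat_symmetric[of "psi y"] Cmat_mult_psi inner_commute)
  finally show ?thesis .
qed

lemma integral_strict_trunc_scaleR_psi:
  assumes g: "g \<in> L2 H"
  shows "integrable H (\<lambda>y. (if zfun A y < t then g y else 0) *\<^sub>R psi y)"
    and "(\<integral>y. (if zfun A y < t then g y else 0) *\<^sub>R psi y \<partial>H) = Tcoef g t"
proof -
  have [measurable]: "g \<in> borel_measurable H" using g by (rule L2_measurable)
  show "integrable H (\<lambda>y. (if zfun A y < t then g y else 0) *\<^sub>R psi y)"
    by (rule Bochner_Integration.integrable_bound[OF integrable_trunc_scaleR_psi[OF g, of t]])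
      (simp_all add: trunc_def)
  show "(\<integral>y. (if zfun A y < t then g y else 0) *\<^sub>R psi y \<partial>H) = Tcoef g t"
    unfolding Tcoef_def
  proof (rule integral_cong_AE)
    show "AE y in H. (if zfun A y < t then g y else 0) *\<^sub>R psi y = trunc g t y *\<^sub>R psi y"
      using AE_zfun_neq[of t] by eventually_elim (simp add: trunc_def)
  qed (simp_all add: trunc_def)
qed

lemma integrable_upper_mult_psi_inner_mu:
  assumes g: "g \<in> L2 H"
  shows "integrable H (\<lambda>y'. if zfun A y < zfun A y' then g y' * (psi y \<bullet> mu y') else 0)"
proof -
  have "integrable H (\<lambda>y'. g y' * (psi y \<bullet> mu y'))"
    by (rule L2_mult_integrable[OF g L2_inner_mu])
  then show ?thesis by (rule integrable_if_zero) measurable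
qed

lemma integral_mult_kernel_Cmat_max:
  assumes g: "g \<in> L2 H"
  shows "(\<integral>y'. g y' * (psi y \<bullet> (C (max (zfun A y) (zfun A y')) *v psi y')) \<partial>H)
    = Top H mu A g y + (\<integral>y'. (if zfun A y < zfun A y' then g y' * (psi y \<bullet> mu y') else 0) \<partial>H)"
proof -
  have "psi y \<bullet> (C (max (zfun A y) (zfun A y')) *v psi y')
      = (if zfun A y' \<le> zfun A y then psi y' \<bullet> mu y else psi y \<bullet> mu y')" for y'
    by (cases "zfun A y' \<le> zfun A y") (simp_all add: max_def Cmat_symmetric[of "psi y"] Cmat_mult_psi)
  then have "(\<integral>y'. g y' * (psi y \<bullet> (C (max (zfun A y) (zfun A y')) *v psi y')) \<partial>H)
      = (\<integral>y'. trunc g (zfun A y) y' * (psi y' \<bullet> mu y)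
          + (if zfun A y < zfun A y' then g y' * (psi y \<bullet> mu y') else 0) \<partial>H)"
    by (intro Bochner_Integration.integral_cong) (auto simp: trunc_def)
  also have "\<dots> = (\<integral>y'. trunc g (zfun A y) y' * (psi y' \<bullet> mu y) \<partial>H)
      + (\<integral>y'. (if zfun A y < zfun A y' then g y' * (psi y \<bullet> mu y') else 0) \<partial>H)"
  proof (rule Bochner_Integration.integral_add[OF _ integrable_upper_mult_psi_inner_mu[OF g]])
    show "integrable H (\<lambda>y'. trunc g (zfun A y) y' * (psi y' \<bullet> mu y))"
      using integrable_inner_left[OF integrable_trunc_scaleR_psi[OF g], where c="mu y"] by simp
  qed
  finally show ?thesis by (simp only: Top_eq_integral[OF g])
qed

lemma Tadj_Top:
  assumes g: "g \<in> L2 H" and van: "vanishes_above g s"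
  shows "Tadj (Top H mu A g) y = Top H mu A g y
           + (\<integral>y'. (if zfun A y < zfun A y' then g y' * (psi y \<bullet> mu y') else 0) \<partial>H)"
proof -
  have [measurable]: "g \<in> borel_measurable H" using g by (rule L2_measurable)
  define F where "F x y' = (if zfun A y \<le> zfun A x \<and> zfun A y' \<le> zfun A x
      then (psi y \<bullet> mu x) * (g y' * (psi y' \<bullet> mu x)) else 0)" for x y'
  have Fubini: "(\<integral>x. (\<integral>y'. F x y' \<partial>H) \<partial>H) = (\<integral>y'. (\<integral>x. F x y' \<partial>H) \<partial>H)"
  proof (rule Fubini_pair_H)
    show "(\<lambda>(x, y'). F x y') \<in> borel_measurable (H \<Otimes>\<^sub>M H)"
      unfolding F_def case_prod_beta by measurable
    show "integrable H (\<lambda>x. norm (psi y) * (norm (mu x) * norm (mu x)))"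
      using integrable_norm_mu_sq by simp
    show "integrable H (\<lambda>y'. norm (g y' *\<^sub>R psi y'))"
      by (rule integrable_norm[OF integrable_scaleR_psi[OF g van]])
    show "\<bar>F x y'\<bar> \<le> norm (psi y) * (norm (mu x) * norm (mu x)) * norm (g y' *\<^sub>R psi y')" for x y'
    proof -
      have "\<bar>F x y'\<bar> \<le> \<bar>psi y \<bullet> mu x\<bar> * (\<bar>g y'\<bar> * \<bar>psi y' \<bullet> mu x\<bar>)"
        by (simp add: F_def abs_mult)
      also have "\<dots> \<le> (norm (psi y) * norm (mu x)) * (\<bar>g y'\<bar> * (norm (psi y') * norm (mu x)))"
        by (intro mult_mono mult_left_mono Cauchy_Schwarz_ineq2) simp_all
      finally show ?thesis by (simp add: mult_ac)
    qed
  qed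
  have inner_y': "(\<integral>y'. F x y' \<partial>H) = (if zfun A y \<le> zfun A x then (psi y \<bullet> mu x) * Top H mu A g x else 0)" for x
  proof -
    have "(\<integral>y'. F x y' \<partial>H)
        = (\<integral>y'. (if zfun A y \<le> zfun A x then psi y \<bullet> mu x else 0) * (trunc g (zfun A x) y' * (psi y' \<bullet> mu x)) \<partial>H)"
      by (rule Bochner_Integration.integral_cong) (simp_all add: F_def trunc_def)
    then show ?thesis by (simp add: Top_eq_integral[OF g])
  qed
  have inner_x: "(\<integral>x. F x y' \<partial>H) = g y' * (psi y \<bullet> (C (max (zfun A y) (zfun A y')) *v psi y'))" for y'
    unfolding Cmat_bilinear
    by (subst integral_mult_right_zero[symmetric], rule Bochner_Integration.integral_cong)
      (simp_all add: F_def inner_commute)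
  have "Tadj (Top H mu A g) y = (\<integral>x. (\<integral>y'. F x y' \<partial>H) \<partial>H)"
    by (simp only: Tadj_def inner_y')
  also have "\<dots> = (\<integral>y'. g y' * (psi y \<bullet> (C (max (zfun A y) (zfun A y')) *v psi y')) \<partial>H)"
    by (simp only: Fubini inner_x)
  finally show ?thesis by (simp only: integral_mult_kernel_Cmat_max[OF g])
qed

lemma integral_mult_upper:
  assumes g: "g \<in> L2 H" and van: "vanishes_above g s"
  defines "S y \<equiv> \<integral>y'. (if zfun A y < zfun A y' then g y' * (psi y \<bullet> mu y') else 0) \<partial>H"
  shows "integrable H (\<lambda>y. g y * S y)"
    and "(\<integral>y. g y * S y \<partial>H) = (\<integral>y. g y * Top H mu A g y \<partial>H)"
proof -
  have [measurable]: "g \<in> borel_measurable H" using g by (rule L2_measurable)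
  have [measurable]: "(\<lambda>p. g (fst p)) \<in> borel_measurable (H \<Otimes>\<^sub>M H)"
    and [measurable]: "(\<lambda>p. g (snd p)) \<in> borel_measurable (H \<Otimes>\<^sub>M H)"
    by (rule measurable_compose[OF measurable_fst] measurable_compose[OF measurable_snd], measurable)+
  define G where "G y y' = g y * (if zfun A y < zfun A y' then g y' * (psi y \<bullet> mu y') else 0)" for y y'
  have G_measurable: "(\<lambda>(y, y'). G y y') \<in> borel_measurable (H \<Otimes>\<^sub>M H)"
    unfolding G_def case_prod_beta by measurable
  have G_integrable: "integrable H (\<lambda>y. norm (g y *\<^sub>R psi y))" "integrable H (\<lambda>y'. \<bar>g y'\<bar> * norm (mu y'))"
    by (rule integrable_norm[OF integrable_scaleR_psi[OF g van]], rule L2_mult_integrable[OF L2_abs[OF g] L2_norm_mu])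
  have G_bound: "\<bar>G y y'\<bar> \<le> norm (g y *\<^sub>R psi y) * (\<bar>g y'\<bar> * norm (mu y'))" for y y'
  proof -
    have "\<bar>G y y'\<bar> \<le> \<bar>g y\<bar> * (\<bar>g y'\<bar> * \<bar>psi y \<bullet> mu y'\<bar>)"
      by (simp add: G_def abs_mult)
    also have "\<dots> \<le> \<bar>g y\<bar> * (\<bar>g y'\<bar> * (norm (psi y) * norm (mu y')))"
      by (intro mult_left_mono Cauchy_Schwarz_ineq2) simp_all
    finally show ?thesis by (simp add: mult_ac)
  qed
  have inner_y': "(\<integral>y'. G y y' \<partial>H) = g y * S y" for y
    unfolding G_def S_def by (rule integral_mult_right_zero)
  have inner_y: "(\<integral>y. G y y' \<partial>H) = g y' * Top H mu A g y'" for y'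
  proof -
    have "(\<integral>y. G y y' \<partial>H) = (\<integral>y. ((if zfun A y < zfun A y' then g y else 0) *\<^sub>R psi y) \<bullet> mu y' \<partial>H) * g y'"
      by (subst integral_mult_left_zero[symmetric], rule Bochner_Integration.integral_cong) (simp_all add: G_def)
    also have "(\<integral>y. ((if zfun A y < zfun A y' then g y else 0) *\<^sub>R psi y) \<bullet> mu y' \<partial>H)
        = Tcoef g (zfun A y') \<bullet> mu y'"
      using integral_inner_left[OF integral_strict_trunc_scaleR_psi(1)[OF g], where c="mu y'"]
        integral_strict_trunc_scaleR_psi(2)[OF g] by (simp only:)
    finally show ?thesis by (simp add: Top_eq[OF g])
  qed
  show "integrable H (\<lambda>y. g y * S y)"
    using Fubini_pair_H(2)[OF G_measurable G_integrable G_bound] by (simp add: inner_y')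
  show "(\<integral>y. g y * S y \<partial>H) = (\<integral>y. g y * Top H mu A g y \<partial>H)"
    using Fubini_pair_H(1)[OF G_measurable G_integrable G_bound] by (simp add: inner_y' inner_y)
qed

lemma integral_Top_sq:
  assumes g: "g \<in> L2 H" and van: "vanishes_above g s"
  shows "(\<integral>x. (Top H mu A g x)\<^sup>2 \<partial>H) = 2 * (\<integral>x. g x * Top H mu A g x \<partial>H)"
proof -
  define S where "S y = (\<integral>y'. (if zfun A y < zfun A y' then g y' * (psi y \<bullet> mu y') else 0) \<partial>H)" for y
  have "(\<integral>x. (Top H mu A g x)\<^sup>2 \<partial>H) = (\<integral>y. g y * Tadj (Top H mu A g) y \<partial>H)"
    using integral_Top_mult[OF g van L2_Top[OF g van]] by (simp add: power2_eq_square)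
  also have "\<dots> = (\<integral>y. g y * Top H mu A g y + g y * S y \<partial>H)"
    by (simp add: Tadj_Top[OF g van] S_def distrib_left)
  also have "\<dots> = (\<integral>y. g y * Top H mu A g y \<partial>H) + (\<integral>y. g y * S y \<partial>H)"
    using L2_mult_integrable[OF g L2_Top[OF g van]] integral_mult_upper(1)[OF g van]
    by (simp add: S_def)
  also have "(\<integral>y. g y * S y \<partial>H) = (\<integral>y. g y * Top H mu A g y \<partial>H)"
    using integral_mult_upper(2)[OF g van] by (simp add: S_def)
  finally show ?thesis by simp
qed

lemma integral_Kop_sq_vanishes_above:
  assumes g: "g \<in> L2 H" and van: "vanishes_above g s"
  shows "(\<integral>x. (Kop H mu A g x)\<^sup>2 \<partial>H) = (\<integral>x. (g x)\<^sup>2 \<partial>H)"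
proof -
  have T: "Top H mu A g \<in> L2 H" by (rule L2_Top[OF g van])
  have "(\<integral>x. (Kop H mu A g x)\<^sup>2 \<partial>H)
      = (\<integral>x. (g x)\<^sup>2 - 2 * (g x * Top H mu A g x) + (Top H mu A g x)\<^sup>2 \<partial>H)"
    by (rule Bochner_Integration.integral_cong) (simp_all add: Kop_def power2_eq_square algebra_simps)
  also have "\<dots> = (\<integral>x. (g x)\<^sup>2 \<partial>H) - 2 * (\<integral>x. g x * Top H mu A g x \<partial>H) + (\<integral>x. (Top H mu A g x)\<^sup>2 \<partial>H)"
    using L2_integrable_sq[OF g] L2_mult_integrable[OF g T] L2_integrable_sq[OF T] by simp
  finally show ?thesis by (simp add: integral_Top_sq[OF g van])
qed

lemma L2_Kop_vanishes_above: "g \<in> L2 H \<Longrightarrow> vanishes_above g s \<Longrightarrow> Kop H mu A g \<in> L2 H"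
  unfolding Kop_def by (rule L2_diff[OF _ L2_Top])

lemma integral_Kop_mult_inner_mu_vanishes_above:
  assumes g: "g \<in> L2 H" and van: "vanishes_above g s"
  shows "(\<integral>x. Kop H mu A g x * (mu x \<bullet> v) \<partial>H) = 0"
proof -
  have "(\<integral>x. Kop H mu A g x * (mu x \<bullet> v) \<partial>H)
      = (\<integral>x. g x * (mu x \<bullet> v) \<partial>H) - (\<integral>x. Top H mu A g x * (mu x \<bullet> v) \<partial>H)"
    using L2_mult_integrable[OF g L2_inner_mu] L2_mult_integrable[OF L2_Top[OF g van] L2_inner_mu]
    by (simp add: Kop_def left_diff_distrib inner_commute)
  also have "(\<integral>x. Top H mu A g x * (mu x \<bullet> v) \<partial>H) = (\<integral>x. g x * (mu x \<bullet> v) \<partial>H)"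
  proof -
    have "(\<lambda>x. mu x \<bullet> v) \<in> L2 H" using L2_inner_mu[of v] by (simp add: inner_commute)
    from integral_Top_mult[OF g van this] show ?thesis by (simp only: Tadj_inner_mu)
  qed
  finally show ?thesis by simp
qed

section \<open>Isometry and orthogonality of \<open>K\<close> on \<open>L\<^sub>2(H)\<close>\<close>

lemma Kop_lincomb:
  assumes "g1 \<in> L2 H" "g2 \<in> L2 H"
  shows "Kop H mu A (\<lambda>x. a * g1 x + c * g2 x) x = a * Kop H mu A g1 x + c * Kop H mu A g2 x"
  unfolding Kop_def Top_lincomb[OF assms] by (simp add: algebra_simps)

lemma Kop_diff:
  assumes "g1 \<in> L2 H" "g2 \<in> L2 H"
  shows "Kop H mu A (\<lambda>x. g1 x - g2 x) x = Kop H mu A g1 x - Kop H mu A g2 x"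
  using Kop_lincomb[OF assms, of 1 "-1"] by simp

lemma Kop_trunc:
  assumes g: "g \<in> L2 H" and x: "zfun A x \<le> s"
  shows "Kop H mu A (trunc g s) x = Kop H mu A g x"
proof -
  have "Tcoef (trunc g s) (zfun A x) = Tcoef g (zfun A x)"
    unfolding Tcoef_def using x by (simp add: trunc_trunc)
  moreover have "trunc g s x = g x" using x by (simp add: trunc_def)
  ultimately show ?thesis by (simp add: Kop_def Top_eq g L2_trunc[OF g])
qed

lemma integral_Kop_sq_below_le:
  assumes g: "g \<in> L2 H"
  shows "integrable H (\<lambda>x. if zfun A x \<le> s then (Kop H mu A g x)\<^sup>2 else 0)"
    and "(\<integral>x. (if zfun A x \<le> s then (Kop H mu A g x)\<^sup>2 else 0) \<partial>H) \<le> (\<integral>x. (g x)\<^sup>2 \<partial>H)"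
proof -
  let ?Ks = "Kop H mu A (trunc g s)"
  have Ks: "?Ks \<in> L2 H"
    by (rule L2_Kop_vanishes_above[OF L2_trunc[OF g] vanishes_above_trunc])
  have eq: "(\<lambda>x. if zfun A x \<le> s then (Kop H mu A g x)\<^sup>2 else 0)
      = (\<lambda>x. if zfun A x \<le> s then (?Ks x)\<^sup>2 else 0)"
    by (auto simp: fun_eq_iff Kop_trunc[OF g])
  show int: "integrable H (\<lambda>x. if zfun A x \<le> s then (Kop H mu A g x)\<^sup>2 else 0)"
    unfolding eq using L2_integrable_sq[OF Ks] by (rule integrable_if_zero) measurable
  have "(\<integral>x. (if zfun A x \<le> s then (Kop H mu A g x)\<^sup>2 else 0) \<partial>H) \<le> (\<integral>x. (?Ks x)\<^sup>2 \<partial>H)"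
    using int L2_integrable_sq[OF Ks] by (rule integral_mono) (simp add: Kop_trunc[OF g])
  also have "\<dots> = (\<integral>x. (trunc g s x)\<^sup>2 \<partial>H)"
    by (rule integral_Kop_sq_vanishes_above[OF L2_trunc[OF g] vanishes_above_trunc])
  also have "\<dots> \<le> (\<integral>x. (g x)\<^sup>2 \<partial>H)" by (rule integral_trunc_sq_le[OF g])
  finally show "(\<integral>x. (if zfun A x \<le> s then (Kop H mu A g x)\<^sup>2 else 0) \<partial>H) \<le> (\<integral>x. (g x)\<^sup>2 \<partial>H)" .
qed

lemma
  assumes g: "g \<in> L2 H"
  shows L2_Kop: "Kop H mu A g \<in> L2 H"
    and integral_Kop_sq_le: "(\<integral>x. (Kop H mu A g x)\<^sup>2 \<partial>H) \<le> (\<integral>x. (g x)\<^sup>2 \<partial>H)"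
proof -
  let ?K = "Kop H mu A g"
  define f where "f n x = (if zfun A x \<le> real n then (?K x)\<^sup>2 else 0)" for n x
  have f_int: "integrable H (f n)" and f_le: "integral\<^sup>L H (f n) \<le> (\<integral>x. (g x)\<^sup>2 \<partial>H)" for n
    unfolding f_def using integral_Kop_sq_below_le[OF g] by blast+
  have f_mono: "mono (\<lambda>n. f n x)" for x
    by (rule monoI) (auto simp: f_def)
  have f_lim: "(\<lambda>n. f n x) \<longlonglongrightarrow> (?K x)\<^sup>2" for x
  proof (rule tendsto_eventually)
    obtain N :: nat where "zfun A x \<le> real N" using real_arch_simple by blast
    then show "\<forall>\<^sub>F n in sequentially. f n x = (?K x)\<^sup>2"
      unfolding eventually_sequentially by (intro exI[of _ N]) (auto simp: f_def intro: order_trans)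
  qed
  have "incseq (\<lambda>n. integral\<^sup>L H (f n))"
    using f_int by (intro monoI integral_mono) (auto simp: f_def)
  then have int_lim: "(\<lambda>n. integral\<^sup>L H (f n)) \<longlonglongrightarrow> (SUP n. integral\<^sup>L H (f n))"
    using f_le by (intro LIMSEQ_incseq_SUP bdd_aboveI) auto
  have Ksq: "(\<lambda>x. (?K x)\<^sup>2) \<in> borel_measurable H"
    using borel_measurable_Kop[OF g] by measurable
  have "integrable H (\<lambda>x. (?K x)\<^sup>2)"
    by (rule integrable_monotone_convergence[OF f_int _ _ int_lim Ksq]) (simp_all add: f_mono f_lim)
  then show "?K \<in> L2 H" using borel_measurable_Kop[OF g] by (simp add: L2_def)
  have "(\<integral>x. (?K x)\<^sup>2 \<partial>H) = (SUP n. integral\<^sup>L H (f n))"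
    by (rule integral_monotone_convergence[OF f_int _ _ int_lim Ksq]) (simp_all add: f_mono f_lim)
  also have "\<dots> \<le> (\<integral>x. (g x)\<^sup>2 \<partial>H)" by (rule cSUP_least) (simp_all add: f_le)
  finally show "(\<integral>x. (?K x)\<^sup>2 \<partial>H) \<le> (\<integral>x. (g x)\<^sup>2 \<partial>H)" .
qed

lemma L2_tendsto_trunc:
  assumes g: "g \<in> L2 H"
  shows "(\<lambda>n. \<integral>x. (g x - trunc g (real n) x)\<^sup>2 \<partial>H) \<longlonglongrightarrow> 0"
proof -
  have [measurable]: "g \<in> borel_measurable H" using g by (rule L2_measurable)
  have "(\<lambda>n. \<integral>x. (g x - trunc g (real n) x)\<^sup>2 \<partial>H) \<longlonglongrightarrow> (\<integral>x. 0 \<partial>H)"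
  proof (rule integral_dominated_convergence[where w="\<lambda>x. (g x)\<^sup>2"])
    show "integrable H (\<lambda>x. (g x)\<^sup>2)" using g by (rule L2_integrable_sq)
    show "AE x in H. (\<lambda>n. (g x - trunc g (real n) x)\<^sup>2) \<longlonglongrightarrow> 0"
    proof (rule AE_I2, rule tendsto_eventually)
      fix x
      obtain N :: nat where "zfun A x \<le> real N" using real_arch_simple by blast
      then show "\<forall>\<^sub>F n in sequentially. (g x - trunc g (real n) x)\<^sup>2 = 0"
        unfolding eventually_sequentially by (intro exI[of _ N]) (auto simp: trunc_def intro: order_trans)
    qed
    show "AE x in H. norm ((g x - trunc g (real n) x)\<^sup>2) \<le> (g x)\<^sup>2" for n
      by (simp add: trunc_def)
  qed (simp_all add: trunc_def)
  then show ?thesis by simp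
qed

lemma L2_tendsto_Kop_trunc:
  assumes g: "g \<in> L2 H"
  shows "(\<lambda>n. \<integral>x. (Kop H mu A g x - Kop H mu A (trunc g (real n)) x)\<^sup>2 \<partial>H) \<longlonglongrightarrow> 0"
proof (rule tendsto_sandwich[OF _ _ tendsto_const L2_tendsto_trunc[OF g]])
  show "\<forall>\<^sub>F n in sequentially. 0 \<le> (\<integral>x. (Kop H mu A g x - Kop H mu A (trunc g (real n)) x)\<^sup>2 \<partial>H)"
    by simp
  have "(\<integral>x. (Kop H mu A g x - Kop H mu A (trunc g (real n)) x)\<^sup>2 \<partial>H)
      \<le> (\<integral>x. (g x - trunc g (real n) x)\<^sup>2 \<partial>H)" for n
    using integral_Kop_sq_le[OF L2_diff[OF g L2_trunc[OF g]]]
    by (simp add: Kop_diff[OF g L2_trunc[OF g]])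
  then show "\<forall>\<^sub>F n in sequentially. (\<integral>x. (Kop H mu A g x - Kop H mu A (trunc g (real n)) x)\<^sup>2 \<partial>H)
      \<le> (\<integral>x. (g x - trunc g (real n) x)\<^sup>2 \<partial>H)"
    by simp
qed

lemma integral_Kop_sq:
  assumes g: "g \<in> L2 H"
  shows "(\<integral>x. (Kop H mu A g x)\<^sup>2 \<partial>H) = (\<integral>x. (g x)\<^sup>2 \<partial>H)"
proof (rule LIMSEQ_unique)
  have trunc: "\<And>n. trunc g (real n) \<in> L2 H" by (rule L2_trunc[OF g])
  show "(\<lambda>n. \<integral>x. (Kop H mu A (trunc g (real n)) x)\<^sup>2 \<partial>H) \<longlonglongrightarrow> (\<integral>x. (Kop H mu A g x)\<^sup>2 \<partial>H)"
    by (rule L2_tendsto_sq[OF L2_Kop[OF g] L2_Kop[OF trunc] L2_tendsto_Kop_trunc[OF g]])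
  have "(\<lambda>n. \<integral>x. (trunc g (real n) x)\<^sup>2 \<partial>H) \<longlonglongrightarrow> (\<integral>x. (g x)\<^sup>2 \<partial>H)"
    by (rule L2_tendsto_sq[OF g trunc L2_tendsto_trunc[OF g]])
  then show "(\<lambda>n. \<integral>x. (Kop H mu A (trunc g (real n)) x)\<^sup>2 \<partial>H) \<longlonglongrightarrow> (\<integral>x. (g x)\<^sup>2 \<partial>H)"
    by (simp add: integral_Kop_sq_vanishes_above[OF trunc vanishes_above_trunc])
qed

lemma integral_Kop_mult_inner_mu:
  assumes g: "g \<in> L2 H"
  shows "(\<integral>x. Kop H mu A g x * (mu x \<bullet> v) \<partial>H) = 0"
proof (rule LIMSEQ_unique)
  have trunc: "\<And>n. trunc g (real n) \<in> L2 H" by (rule L2_trunc[OF g])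
  have "(\<lambda>x. mu x \<bullet> v) \<in> L2 H" using L2_inner_mu[of v] by (simp add: inner_commute)
  then show "(\<lambda>n. \<integral>x. Kop H mu A (trunc g (real n)) x * (mu x \<bullet> v) \<partial>H)
      \<longlonglongrightarrow> (\<integral>x. Kop H mu A g x * (mu x \<bullet> v) \<partial>H)"
    by (rule L2_tendsto_inner[OF L2_Kop[OF g] L2_Kop[OF trunc] _ L2_tendsto_Kop_trunc[OF g]])
  show "(\<lambda>n. \<integral>x. Kop H mu A (trunc g (real n)) x * (mu x \<bullet> v) \<partial>H) \<longlonglongrightarrow> 0"
    by (simp add: integral_Kop_mult_inner_mu_vanishes_above[OF trunc vanishes_above_trunc])
qed

lemma integral_Kop_scaleR_mu:
  assumes g: "g \<in> L2 H"
  shows "(\<integral>y. Kop H mu A g y *\<^sub>R mu y \<partial>H) = 0"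
proof -
  have int: "integrable H (\<lambda>y. Kop H mu A g y *\<^sub>R mu y)"
    by (rule integrable_vecI) (simp add: L2_mult_integrable[OF L2_Kop[OF g] mu_L2])
  have "(\<integral>y. Kop H mu A g y *\<^sub>R mu y \<partial>H) \<bullet> v = 0" for v
    using integral_inner_left[OF int, of v] integral_Kop_mult_inner_mu[OF g, of v] by simp
  from this[of "\<integral>y. Kop H mu A g y *\<^sub>R mu y \<partial>H"] show ?thesis by simp
qed

lemma integral_Kop_mult:
  assumes g1: "g1 \<in> L2 H" and g2: "g2 \<in> L2 H"
  shows "(\<integral>x. Kop H mu A g1 x * Kop H mu A g2 x \<partial>H) = (\<integral>x. g1 x * g2 x \<partial>H)"
proof -
  have sq_add: "(\<integral>x. (u x + w x)\<^sup>2 \<partial>H)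
      = (\<integral>x. (u x)\<^sup>2 \<partial>H) + 2 * (\<integral>x. u x * w x \<partial>H) + (\<integral>x. (w x)\<^sup>2 \<partial>H)"
    if u: "u \<in> L2 H" and w: "w \<in> L2 H" for u w
  proof -
    have "(\<integral>x. (u x + w x)\<^sup>2 \<partial>H) = (\<integral>x. (u x)\<^sup>2 + 2 * (u x * w x) + (w x)\<^sup>2 \<partial>H)"
      by (rule Bochner_Integration.integral_cong) (simp_all add: power2_eq_square algebra_simps)
    then show ?thesis
      using L2_integrable_sq[OF u] L2_integrable_sq[OF w] L2_mult_integrable[OF u w] by simp
  qed
  have "(\<integral>x. (Kop H mu A g1 x + Kop H mu A g2 x)\<^sup>2 \<partial>H) = (\<integral>x. (g1 x + g2 x)\<^sup>2 \<partial>H)"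
    using integral_Kop_sq[OF L2_add[OF g1 g2]] Kop_lincomb[OF g1 g2, of 1 1] by simp
  then show ?thesis
    unfolding sq_add[OF L2_Kop[OF g1] L2_Kop[OF g2]] sq_add[OF g1 g2]
    by (simp add: integral_Kop_sq[OF g1] integral_Kop_sq[OF g2])
qed

lemma Kop_inj:
  assumes g1: "g1 \<in> L2 H" and g2: "g2 \<in> L2 H" and eq: "Kop H mu A g1 = Kop H mu A g2"
  shows "g1 = g2"
proof -
  define d where "d x = g1 x - g2 x" for x
  have d: "d \<in> L2 H" unfolding d_def by (rule L2_diff[OF g1 g2])
  have Kd: "Kop H mu A d x = 0" for x
    unfolding d_def Kop_diff[OF g1 g2] eq by simp
  have "(\<integral>x. (d x)\<^sup>2 \<partial>H) = 0" using integral_Kop_sq[OF d] by (simp add: Kd)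
  then have "AE x in H. d x = 0"
    using integral_nonneg_eq_0_iff_AE[OF L2_integrable_sq[OF d]] by simp
  then have "Tcoef d t = 0" for t
    unfolding Tcoef_def by (intro integral_eq_zero_AE) (auto elim: AE_mp simp: trunc_def)
  then have "d x = 0" for x
    using Kd[of x] by (simp add: Kop_def Top_eq[OF d])
  then show ?thesis by (simp add: d_def fun_eq_iff)
qed

end

theorem corollary6p1:
  fixes H :: "(real ^ 'p) measure" and F :: "real measure"
    and mu :: "real ^ 'p \<Rightarrow> real ^ 'q"
    and A :: "real \<Rightarrow> (real ^ 'p) set"
    and M :: "'w measure"
    and b :: "(real ^ 'p \<Rightarrow> real) \<Rightarrow> (real \<Rightarrow> real) \<Rightarrow> 'w \<Rightarrow> real"
    and Z :: "'w \<Rightarrow> real ^ 'q"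
    and phi :: "real \<Rightarrow> real"
  assumes H: "prob_space H" "sets H = sets borel"
    and F: "prob_space F" "sets F = sets borel"
    and mu_L2: "\<And>i. (\<lambda>x. mu x $ i) \<in> L2 H"
    and mu_pd: "\<And>v. v \<noteq> 0 \<Longrightarrow> 0 < v \<bullet> ((integral\<^sup>L H (\<lambda>y. outer (mu y))) *v v)"
    and scan: "scanning_family H A"
    and C_nonsing: "\<And>z. invertible (Cmat H mu A z)"
    and M: "prob_space M"
    and b_gauss: "centered_gaussian_process M (L2 H \<times> L2 F) (\<lambda>(g, f). b g f)
                    (\<lambda>(g1, f1) (g2, f2). (\<integral>x. g1 x * g2 x \<partial>H) * (\<integral>x. f1 x * f2 x \<partial>F))"
    and b_lin1: "\<And>g1 g2 f a c. g1 \<in> L2 H \<Longrightarrow> g2 \<in> L2 H \<Longrightarrow> f \<in> L2 F \<Longrightarrow>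
                   AE w in M. b (\<lambda>x. a * g1 x + c * g2 x) f w = a * b g1 f w + c * b g2 f w"
    and b_lin2: "\<And>g f1 f2 a c. g \<in> L2 H \<Longrightarrow> f1 \<in> L2 F \<Longrightarrow> f2 \<in> L2 F \<Longrightarrow>
                   AE w in M. b g (\<lambda>x. a * f1 x + c * f2 x) w = a * b g f1 w + c * b g f2 w"
    and Z: "Z \<in> borel_measurable M"
    and phi: "phi \<in> L2 F"
  shows "centered_gaussian_process M (L2 H)
           (\<lambda>g w. b (Kop H mu A g) phi w
                   - (integral\<^sup>L H (\<lambda>y. Kop H mu A g y *\<^sub>R mu y)) \<bullet> Z w)
           (\<lambda>g1 g2. (\<integral>x. g1 x * g2 x \<partial>H) * (\<integral>x. (phi x)\<^sup>2 \<partial>F))"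
proof -
  (* Only the finite-dimensional distributions of b enter, and g \<mapsto> (K g, phi) is injective. *)
  interpret scanning_setup H mu A
    unfolding scanning_setup_def using H mu_L2 scan C_nonsing sets_eq_imp_space_eq[OF H(2)] by simp
  show ?thesis
  proof (rule centered_gaussian_process_reindex[OF b_gauss, where f="\<lambda>g. (Kop H mu A g, phi)"])
    show "inj_on (\<lambda>g. (Kop H mu A g, phi)) (L2 H)"
      by (auto intro!: inj_onI Kop_inj)
    show "(\<lambda>g. (Kop H mu A g, phi)) ` L2 H \<subseteq> L2 H \<times> L2 F"
      using L2_Kop phi by auto
  qed (simp_all add: integral_Kop_scaleR_mu integral_Kop_mult power2_eq_square)
qed

end
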